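(* Let $T$, $\mathcal{S}=\mathcal{S}_+\cup\mathcal{S}_-$, $\Psi$, $U$, $\lambda,\mu$, $P_\lambda,P_\mu$ and $W$ be as in the context. Consider the discrete-time QBD on phase space $\mathcal{S}$ with transition blocks $$C'_{-1}=\frac12\begin{bmatrix}0&P_{\mu+-}\\0&P_{\mu--}\end{bmatrix},\quad C'_0=\frac12\begin{bmatrix}P_{\mu++}&P_{\lambda+-}\\P_{\mu-+}&P_{\lambda--}\end{bmatrix},\quad C'_1=\frac12\begin{bmatrix}P_{\lambda++}&0\\P_{\lambda-+}&0\end{bmatrix}.$$ Then it has the same $\mathcal{G}$-matrix as the QBD with blocks $$C_{-1}=\begin{bmatrix}0&(I-\mu^{-1}T_{++})^{-1}P_{\mu+-}\\0&W\end{bmatrix},\ C_0=\begin{bmatrix}0&(I-\mu^{-1}T_{++})^{-1}P_{\lambda+-}\\0&0\end{bmatrix},\ C_1=\begin{bmatrix}(I-\mu^{-1}T_{++})^{-1}P_{\lambda++}&0\\0&0\end{bmatrix};$$ that is, its $\mathcal{G}$-matrix equals $\begin{bmatrix}0&\Psi\\0&W\end{bmatrix}$.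
   Context: $T$ is the generator of a continuous-time Markov chain on a finite set $\mathcal{S}=\mathcal{S}_+\cup\mathcal{S}_-$ (disjoint, both nonempty), partitioned into blocks $T_{++},T_{+-},T_{-+},T_{--}$ according to $\mathcal{S}_\pm$. $\Psi$ is the minimal nonnegative solution of $T_{+-}+\Psi T_{--}+T_{++}\Psi+\Psi T_{-+}\Psi=0$ (the first-return probability matrix of the unit-rate fluid queue with phase generator $T$, rates $+1$ on $\mathcal{S}_+$ and $-1$ on $\mathcal{S}_-$), and $U:=T_{--}+T_{-+}\Psi$. $\lambda,\mu>0$ satisfy $\lambda,\mu\ge\max_i|T_{ii}|$; $P_\lambda:=I+\lambda^{-1}T$, $P_\mu:=I+\mu^{-1}T$ with blocks $P_{\lambda++}$ etc.; $W:=(I+\mu^{-1}U)(I-\lambda^{-1}U)^{-1}$. A discrete-time quasi-birth-death process (QBD) with transition blocks $L_{-1},L_0,L_1$ is a Markov chain $\{(Y_n,\kappa_n)\}$ on $\mathbb{Z}\times\mathcal{S}$ with $\mathbb{P}[Y_n=k+d,\kappa_n=j\mid Y_{n-1}=k,\kappa_{n-1}=i]=(L_d)_{ij}$ for $d\in\{-1,0,1\}$. Its $\mathcal{G}$-matrix has entries $\mathcal{G}_{ij}=\mathbb{P}[\theta<\infty,\kappa_\theta=j\mid Y_0=k,\kappa_0=i]$ with $\theta=\inf\{n>0:Y_n=k-1\}$. Matrices are partitioned into blocks according to $\mathcal{S}_+,\mathcal{S}_-$. *)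

theory Defs
  imports "Jordan_Normal_Form.Gauss_Jordan_Elimination"
begin

text \<open>Phase space S = {0..<p+q}; S_+ = {0..<p}, S_- = {p..<p+q}.
Blocks of an (p+q) x (p+q) matrix according to this partition.\<close>

definition blk_pp :: "nat \<Rightarrow> 'a mat \<Rightarrow> 'a mat" where
  "blk_pp p A = mat p p (\<lambda>(i,j). A $$ (i,j))"
definition blk_pm :: "nat \<Rightarrow> 'a mat \<Rightarrow> 'a mat" where
  "blk_pm p A = mat p (dim_col A - p) (\<lambda>(i,j). A $$ (i, j + p))"
definition blk_mp :: "nat \<Rightarrow> 'a mat \<Rightarrow> 'a mat" where
  "blk_mp p A = mat (dim_row A - p) p (\<lambda>(i,j). A $$ (i + p, j))"
definition blk_mm :: "nat \<Rightarrow> 'a mat \<Rightarrow> 'a mat" where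
  "blk_mm p A = mat (dim_row A - p) (dim_col A - p) (\<lambda>(i,j). A $$ (i + p, j + p))"

text \<open>Matrix inverse (the result is only meaningful for invertible matrices).\<close>
definition minv :: "'a::field mat \<Rightarrow> 'a mat" where
  "minv A = (case mat_inverse A of Some B \<Rightarrow> B | None \<Rightarrow> 0\<^sub>m (dim_row A) (dim_col A))"

definition is_generator :: "nat \<Rightarrow> real mat \<Rightarrow> bool" where
  "is_generator n T \<longleftrightarrow> T \<in> carrier_mat n n \<and>
     (\<forall>i<n. \<forall>j<n. i \<noteq> j \<longrightarrow> T $$ (i,j) \<ge> 0) \<and>
     (\<forall>i<n. (\<Sum>j<n. T $$ (i,j)) = 0)"

definition nonneg_mat :: "real mat \<Rightarrow> bool" where
  "nonneg_mat A \<longleftrightarrow> (\<forall>i<dim_row A. \<forall>j<dim_col A. A $$ (i,j) \<ge> 0)"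

definition le_mat :: "real mat \<Rightarrow> real mat \<Rightarrow> bool" where
  "le_mat A B \<longleftrightarrow> (\<forall>i<dim_row A. \<forall>j<dim_col A. A $$ (i,j) \<le> B $$ (i,j))"

definition riccati_sol :: "nat \<Rightarrow> real mat \<Rightarrow> real mat \<Rightarrow> bool" where
  "riccati_sol p T X \<longleftrightarrow> X \<in> carrier_mat p (dim_row T - p) \<and> nonneg_mat X \<and>
     blk_pm p T + X * blk_mm p T + blk_pp p T * X + X * blk_mp p T * X
       = 0\<^sub>m p (dim_row T - p)"

definition min_nonneg_riccati_sol :: "nat \<Rightarrow> real mat \<Rightarrow> real mat \<Rightarrow> bool" where
  "min_nonneg_riccati_sol p T Psi \<longleftrightarrow> riccati_sol p T Psi \<and>
     (\<forall>X. riccati_sol p T X \<longrightarrow> le_mat Psi X)"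

text \<open>Discrete-time QBD with blocks Lm (= L_{-1}), L0, L1 on phases {0..<n}.
  taboo Lm L0 L1 n k i l j = P[Y_k = l, kappa_k = j, Y_s >= 0 for all s <= k | Y_0 = 0, kappa_0 = i]
  (the chain started at level 0 and not yet having visited level -1).\<close>
definition qbd_step :: "real mat \<Rightarrow> real mat \<Rightarrow> real mat \<Rightarrow> int \<Rightarrow> nat \<Rightarrow> nat \<Rightarrow> real" where
  "qbd_step Lm L0 L1 d a b =
     (if d = -1 then Lm $$ (a,b) else if d = 0 then L0 $$ (a,b) else if d = 1 then L1 $$ (a,b) else 0)"

fun qbd_taboo :: "real mat \<Rightarrow> real mat \<Rightarrow> real mat \<Rightarrow> nat \<Rightarrow> nat \<Rightarrow> nat \<Rightarrow> int \<Rightarrow> nat \<Rightarrow> real" where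
  "qbd_taboo Lm L0 L1 n 0 i l j = (if l = 0 \<and> i = j then 1 else 0)"
| "qbd_taboo Lm L0 L1 n (Suc k) i l j =
     (if l < 0 then 0 else
      (\<Sum>l'\<in>{0..int k}. \<Sum>j'<n. qbd_taboo Lm L0 L1 n k i l' j' * qbd_step Lm L0 L1 (l - l') j' j))"

text \<open>G-matrix: G_ij = P[theta < infinity, kappa_theta = j | Y_0 = 0, kappa_0 = i],
  theta the first passage time to level -1, written as the sum over theta = k+1 of
  the first-passage probabilities.\<close>
definition qbd_G :: "nat \<Rightarrow> real mat \<Rightarrow> real mat \<Rightarrow> real mat \<Rightarrow> real mat" where
  "qbd_G n Lm L0 L1 = mat n n (\<lambda>(i,j).
     (\<Sum>k. \<Sum>j'<n. qbd_taboo Lm L0 L1 n k i 0 j' * Lm $$ (j', j)))"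

end

(* The G-matrix of a QBD with nonnegative blocks is the minimal nonnegative solution of
   G = L(-1) + L(0) G + L(1) G^2, by first-step analysis and because passing down two levels is the
   convolution of two one-level passages. For the first QBD, whose level-down block only enters
   S_- and whose level-up block only enters S_+, G has vanishing S_+ columns, G = [0 A; 0 B], and the
   fixed-point equation says that B = (I + U/mu)(I - U/lam)^(-1) with U = T_-- + T_-+ A, and that
   A solves the Riccati equation of Psi. Minimality of Psi gives Psi <= A, while
   E = [0 Psi; 0 W] is itself a fixed point, so G <= E; hence G = E.
   For the second QBD, E is again a fixed point, so its G-matrix lies below E; its S_- rows are W,
   and its S_+ rows satisfy the S_+ equation of the first QBD. This makes it a supersolution of the
   first fixed-point equation, so it also lies above E. *)

theory Submission
  imports Defs "Jordan_Normal_Form.Determinant"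
begin

lemma index_mult_mat_sum:
  assumes "A \<in> carrier_mat n k" "B \<in> carrier_mat k m" "i < n" "j < m"
  shows "(A * B) $$ (i,j) = (\<Sum>r<k. A $$ (i,r) * B $$ (r,j))"
  using assms by (simp add: scalar_prod_def atLeast0LessThan)

declare index_mult_mat(1)[simp del]

lemma pow_mat_Suc_left:
  assumes "X \<in> carrier_mat n n"
  shows "X ^\<^sub>m (Suc m) = X * X ^\<^sub>m m"
proof (induction m)
  case 0
  then show ?case using assms by simp
next
  case (Suc m)
  have "X ^\<^sub>m Suc (Suc m) = (X * X ^\<^sub>m m) * X" using Suc by simp
  also have "\<dots> = X * (X ^\<^sub>m m * X)" using assms by (intro assoc_mult_mat) auto
  finally show ?case by simp
qed

lemma add_mult_distrib_dim:
  assumes "dim_row A = dim_row B" "dim_col A = dim_col B" "dim_col A = dim_row C"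
  shows "(A + B) * (C :: 'a :: semiring_0 mat) = A * C + B * C"
  by (rule add_mult_distrib_mat[OF carrier_mat_triv[of A], where nc="dim_col C"]) (metis assms carrier_mat_triv)+

lemma mult_add_distrib_dim:
  assumes "dim_row B = dim_row C" "dim_col B = dim_col C" "dim_col A = dim_row B"
  shows "(A :: 'a :: semiring_0 mat) * (B + C) = A * B + A * C"
  by (rule mult_add_distrib_mat[OF carrier_mat_triv[of A], where nc="dim_col B"]) (metis assms carrier_mat_triv)+

lemma minus_mult_distrib_dim:
  assumes "dim_row A = dim_row B" "dim_col A = dim_col B" "dim_col A = dim_row C"
  shows "(A - B) * (C :: 'a :: ring mat) = A * C - B * C"
  by (rule minus_mult_distrib_mat[OF carrier_mat_triv[of A], where nc="dim_col C"]) (metis assms carrier_mat_triv)+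

lemma mult_minus_distrib_dim:
  assumes "dim_row B = dim_row C" "dim_col B = dim_col C" "dim_col A = dim_row B"
  shows "(A :: 'a :: ring mat) * (B - C) = A * B - A * C"
  by (rule mult_minus_distrib_mat[OF carrier_mat_triv[of A], where nc="dim_col B"]) (metis assms carrier_mat_triv)+

lemma smult_mult_dim:
  assumes "dim_col A = dim_row B"
  shows "(k \<cdot>\<^sub>m A) * B = (k :: 'a :: comm_semiring_0) \<cdot>\<^sub>m (A * B)"
  by (rule mult_smult_assoc_mat[OF carrier_mat_triv[of A], where nc="dim_col B"]) (metis assms carrier_mat_triv)

lemma mult_smult_dim:
  assumes "dim_col A = dim_row B"
  shows "A * (k \<cdot>\<^sub>m B) = (k :: 'a :: comm_semiring_0) \<cdot>\<^sub>m (A * B)"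
  by (rule mult_smult_distrib[OF carrier_mat_triv[of A], where nc="dim_col B"]) (metis assms carrier_mat_triv)

lemma assoc_mult_dim:
  assumes "dim_col A = dim_row B" "dim_col B = dim_row C"
  shows "(A * B) * (C :: 'a :: semiring_0 mat) = A * (B * C)"
  by (rule assoc_mult_mat[OF carrier_mat_triv[of A], where ?n\<^sub>3="dim_col B" and ?n\<^sub>4="dim_col C"])
    (metis assms carrier_mat_triv)+

lemma smult_add_dim:
  assumes "dim_row A = dim_row B" "dim_col A = dim_col B"
  shows "k \<cdot>\<^sub>m (A + B) = (k :: 'a :: semiring) \<cdot>\<^sub>m A + k \<cdot>\<^sub>m B"
  by (rule add_smult_distrib_left_mat[OF carrier_mat_triv[of A]]) (metis assms carrier_mat_triv)

lemma smult_minus_dim: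
  assumes "dim_row A = dim_row B" "dim_col A = dim_col B"
  shows "k \<cdot>\<^sub>m (A - B) = (k :: 'a :: ring) \<cdot>\<^sub>m A - k \<cdot>\<^sub>m B"
  using assms by (intro eq_matI) (simp_all add: right_diff_distrib)

lemma smult_smult_mat: "k \<cdot>\<^sub>m (l \<cdot>\<^sub>m A) = ((k * l) :: 'a :: semigroup_mult) \<cdot>\<^sub>m A"
  by (intro eq_matI) (simp_all add: mult.assoc)

lemmas mat_dim_algebra = add_mult_distrib_dim mult_add_distrib_dim minus_mult_distrib_dim
  mult_minus_distrib_dim smult_mult_dim mult_smult_dim assoc_mult_dim smult_add_dim smult_minus_dim
  smult_smult_mat

lemma mult_right_cancel_invertible:
  fixes X Y M N :: "real mat"
  assumes "X \<in> carrier_mat r q" "Y \<in> carrier_mat r q" "M \<in> carrier_mat q q" "N \<in> carrier_mat q q"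
    and "M * N = 1\<^sub>m q" and "X * M = Y * M"
  shows "X = Y"
proof -
  note d = carrier_matD[OF assms(1)] carrier_matD[OF assms(2)] carrier_matD[OF assms(3)] carrier_matD[OF assms(4)]
  have "X = X * (M * N)" using assms d by simp
  also have "\<dots> = (X * M) * N" using d by (intro assoc_mult_dim[symmetric]) auto
  also have "\<dots> = (Y * M) * N" using assms by simp
  also have "\<dots> = Y * (M * N)" using d by (intro assoc_mult_dim) auto
  also have "\<dots> = Y" using assms d by simp
  finally show ?thesis .
qed

lemma minv_carrier: "A \<in> carrier_mat n n \<Longrightarrow> minv A \<in> carrier_mat n n"
  unfolding minv_def by (cases "mat_inverse A") (auto dest: mat_inverse(2))

lemma mat_eq_iff_entries:
  "X = Y \<longleftrightarrow> dim_row X = dim_row Y \<and> dim_col X = dim_col Y \<and> (\<forall>i<dim_row Y. \<forall>j<dim_col Y. X $$ (i,j) = Y $$ (i,j))"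
  by (auto intro!: eq_matI)

lemma all_entries_cong:
  "(\<And>i j. i < r \<Longrightarrow> j < c \<Longrightarrow> P i j \<longleftrightarrow> Q i j) \<Longrightarrow> (\<forall>i<r. \<forall>j<c. P i j) \<longleftrightarrow> (\<forall>i<r. \<forall>j<c. Q i j)"
  by auto

lemma nonneg_mat_mult:
  assumes "nonneg_mat A" "nonneg_mat B" "dim_col A = dim_row B"
  shows "nonneg_mat (A * B)"
  unfolding nonneg_mat_def
proof (intro allI impI)
  fix i j assume ij: "i < dim_row (A * B)" "j < dim_col (A * B)"
  have cA: "A \<in> carrier_mat (dim_row A) (dim_col A)" by auto
  have cB: "B \<in> carrier_mat (dim_col A) (dim_col B)" by (metis assms(3) carrier_mat_triv)
  have i: "i < dim_row A" and j: "j < dim_col B" using ij by auto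
  have "(A * B) $$ (i,j) = (\<Sum>r<dim_col A. A $$ (i,r) * B $$ (r,j))"
    by (rule index_mult_mat_sum[OF cA cB i j])
  also have "\<dots> \<ge> 0"
    using assms i j unfolding nonneg_mat_def by (intro sum_nonneg mult_nonneg_nonneg) auto
  finally show "(A * B) $$ (i,j) \<ge> 0" .
qed

lemma nonneg_mat_add:
  "nonneg_mat A \<Longrightarrow> nonneg_mat B \<Longrightarrow> A \<in> carrier_mat r c \<Longrightarrow> B \<in> carrier_mat r c \<Longrightarrow> nonneg_mat (A + B)"
  unfolding nonneg_mat_def by auto

lemma nonneg_mat_smult: "nonneg_mat A \<Longrightarrow> c \<ge> 0 \<Longrightarrow> nonneg_mat (c \<cdot>\<^sub>m A)"
  unfolding nonneg_mat_def by simp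

lemma nonneg_mat_zero: "nonneg_mat (0\<^sub>m r c)"
  unfolding nonneg_mat_def by simp

lemma nonneg_mat_pow:
  assumes "X \<in> carrier_mat n n" "nonneg_mat X"
  shows "nonneg_mat (X ^\<^sub>m m)"
proof (induction m)
  case 0
  then show ?case using assms by (simp add: nonneg_mat_def)
next
  case (Suc m)
  then show ?case using assms by (simp add: nonneg_mat_mult)
qed

lemma nonneg_four_block_mat:
  assumes "A \<in> carrier_mat p p" "B \<in> carrier_mat p q" "C \<in> carrier_mat q p" "D \<in> carrier_mat q q"
    and "nonneg_mat A" "nonneg_mat B" "nonneg_mat C" "nonneg_mat D"
  shows "nonneg_mat (four_block_mat A B C D)"
  using assms unfolding nonneg_mat_def by auto

lemma le_mat_mult_left:
  assumes "X \<in> carrier_mat r k" "A \<in> carrier_mat k c" "A' \<in> carrier_mat k c" "nonneg_mat X"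
    and "le_mat A A'"
  shows "le_mat (X * A) (X * A')"
  unfolding le_mat_def
proof (intro allI impI)
  fix i j assume "i < dim_row (X * A)" "j < dim_col (X * A)"
  then have ij: "i < r" "j < c" using assms(1,2) by auto
  have "(\<Sum>t<k. X $$ (i,t) * A $$ (t,j)) \<le> (\<Sum>t<k. X $$ (i,t) * A' $$ (t,j))"
    using assms ij unfolding nonneg_mat_def le_mat_def by (intro sum_mono mult_left_mono) auto
  then show "(X * A) $$ (i,j) \<le> (X * A') $$ (i,j)"
    by (simp only: index_mult_mat_sum[OF assms(1,2) ij] index_mult_mat_sum[OF assms(1,3) ij])
qed

lemma le_mat_mult_right:
  assumes "A \<in> carrier_mat r k" "A' \<in> carrier_mat r k" "X \<in> carrier_mat k c" "nonneg_mat X"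
    and "le_mat A A'"
  shows "le_mat (A * X) (A' * X)"
  unfolding le_mat_def
proof (intro allI impI)
  fix i j assume "i < dim_row (A * X)" "j < dim_col (A * X)"
  then have ij: "i < r" "j < c" using assms(1,3) by auto
  have "(\<Sum>t<k. A $$ (i,t) * X $$ (t,j)) \<le> (\<Sum>t<k. A' $$ (i,t) * X $$ (t,j))"
    using assms ij unfolding nonneg_mat_def le_mat_def by (intro sum_mono mult_right_mono) auto
  then show "(A * X) $$ (i,j) \<le> (A' * X) $$ (i,j)"
    by (simp only: index_mult_mat_sum[OF assms(1,3) ij] index_mult_mat_sum[OF assms(2,3) ij])
qed

lemma le_mat_refl: "le_mat A A"
  unfolding le_mat_def by simp

lemma le_mat_antisym:
  assumes "A \<in> carrier_mat r c" "B \<in> carrier_mat r c" "le_mat A B" "le_mat B A"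
  shows "A = B"
  using assms unfolding le_mat_def by (intro eq_matI) (auto intro: antisym)

lemma sum_swap_factor:
  fixes a :: "'i \<Rightarrow> real"
  shows "(\<Sum>k\<in>K. \<Sum>i\<in>I. a i * f k i) = (\<Sum>i\<in>I. a i * (\<Sum>k\<in>K. f k i))"
  by (simp add: sum_distrib_left) (rule sum.swap)

lemma sum_swap_factor_nested:
  fixes f :: "'c \<Rightarrow> 'd \<Rightarrow> real"
  shows "(\<Sum>a\<in>A. \<Sum>b\<in>B. (\<Sum>c\<in>C. \<Sum>d\<in>D. f c d * g c d a b) * h a b)
    = (\<Sum>c\<in>C. \<Sum>d\<in>D. f c d * (\<Sum>a\<in>A. \<Sum>b\<in>B. g c d a b * h a b))"
proof -
  have "(\<Sum>a\<in>A. \<Sum>b\<in>B. (\<Sum>c\<in>C. \<Sum>d\<in>D. f c d * g c d a b) * h a b)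
     = (\<Sum>a\<in>A. \<Sum>b\<in>B. \<Sum>c\<in>C. \<Sum>d\<in>D. f c d * (g c d a b * h a b))"
    by (simp add: sum_distrib_right mult.assoc)
  also have "\<dots> = (\<Sum>a\<in>A. \<Sum>c\<in>C. \<Sum>d\<in>D. \<Sum>b\<in>B. f c d * (g c d a b * h a b))"
    by (intro sum.cong refl) (subst sum.swap, intro sum.cong refl, rule sum.swap)
  also have "\<dots> = (\<Sum>c\<in>C. \<Sum>d\<in>D. \<Sum>a\<in>A. \<Sum>b\<in>B. f c d * (g c d a b * h a b))"
    by (subst sum.swap) (intro sum.cong refl, rule sum.swap)
  also have "\<dots> = (\<Sum>c\<in>C. \<Sum>d\<in>D. f c d * (\<Sum>a\<in>A. \<Sum>b\<in>B. g c d a b * h a b))"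
    by (simp add: sum_distrib_left)
  finally show ?thesis .
qed

lemma sum_triangle_reindex:
  fixes g :: "nat \<Rightarrow> nat \<Rightarrow> nat \<Rightarrow> real"
  shows "(\<Sum>a\<le>K. \<Sum>c\<le>a. g c (a - c) (K - a)) = (\<Sum>c\<le>K. \<Sum>b\<le>K - c. g c b (K - c - b))"
proof -
  let ?G = "\<lambda>c b. g c b (K - c - b)"
  have "(\<Sum>a\<le>K. \<Sum>c\<le>a. g c (a - c) (K - a)) = (\<Sum>a\<le>K. \<Sum>c\<le>a. ?G c (a - c))"
    by (intro sum.cong refl) (auto simp: diff_diff_left)
  also have "\<dots> = (\<Sum>(c,b)\<in>{(c,b). c + b \<le> K}. ?G c b)"
    by (rule sum.triangle_reindex_eq[symmetric])
  also have "{(c,b). c + b \<le> K} = Sigma {..K} (\<lambda>c. {..K - c})" by auto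
  also have "(\<Sum>(c,b)\<in>Sigma {..K} (\<lambda>c. {..K - c}). ?G c b) = (\<Sum>c\<le>K. \<Sum>b\<le>K - c. ?G c b)"
    by (rule sum.Sigma[symmetric]) auto
  finally show ?thesis .
qed

lemma sum_convolution_assoc:
  fixes x :: "nat \<Rightarrow> nat \<Rightarrow> real" and y :: "nat \<Rightarrow> nat \<Rightarrow> nat \<Rightarrow> real" and z :: "nat \<Rightarrow> nat \<Rightarrow> real"
  shows "(\<Sum>a\<le>K. \<Sum>r<n. (\<Sum>c\<le>a. \<Sum>s<n. x c s * y (a - c) s r) * z (K - a) r)
       = (\<Sum>c\<le>K. \<Sum>s<n. x c s * (\<Sum>b\<le>K - c. \<Sum>r<n. y b s r * z (K - c - b) r))"
proof -
  define g where "g c b e = (\<Sum>s<n. \<Sum>r<n. x c s * y b s r * z e r)" for c b e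
  have "(\<Sum>r<n. (\<Sum>c\<le>a. \<Sum>s<n. x c s * y (a - c) s r) * z (K - a) r) = (\<Sum>c\<le>a. g c (a - c) (K - a))" for a
  proof -
    have "(\<Sum>r<n. (\<Sum>c\<le>a. \<Sum>s<n. x c s * y (a - c) s r) * z (K - a) r)
        = (\<Sum>r<n. \<Sum>c\<le>a. \<Sum>s<n. x c s * y (a - c) s r * z (K - a) r)"
      by (simp add: sum_distrib_right)
    also have "\<dots> = (\<Sum>c\<le>a. \<Sum>r<n. \<Sum>s<n. x c s * y (a - c) s r * z (K - a) r)"
      by (rule sum.swap)
    also have "\<dots> = (\<Sum>c\<le>a. g c (a - c) (K - a))"
      unfolding g_def by (rule sum.cong[OF refl], rule sum.swap)
    finally show ?thesis .
  qed
  then have "(\<Sum>a\<le>K. \<Sum>r<n. (\<Sum>c\<le>a. \<Sum>s<n. x c s * y (a - c) s r) * z (K - a) r)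
      = (\<Sum>a\<le>K. \<Sum>c\<le>a. g c (a - c) (K - a))"
    by simp
  also have "\<dots> = (\<Sum>c\<le>K. \<Sum>b\<le>K - c. g c b (K - c - b))"
    by (rule sum_triangle_reindex)
  also have "\<dots> = (\<Sum>c\<le>K. \<Sum>s<n. x c s * (\<Sum>b\<le>K - c. \<Sum>r<n. y b s r * z (K - c - b) r))"
  proof (rule sum.cong[OF refl])
    fix c
    have "(\<Sum>b\<le>K - c. g c b (K - c - b)) = (\<Sum>b\<le>K - c. \<Sum>s<n. x c s * (\<Sum>r<n. y b s r * z (K - c - b) r))"
      unfolding g_def by (simp add: sum_distrib_left mult.assoc)
    then show "(\<Sum>b\<le>K - c. g c b (K - c - b)) = (\<Sum>s<n. x c s * (\<Sum>b\<le>K - c. \<Sum>r<n. y b s r * z (K - c - b) r))"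
      by (simp only: sum_swap_factor)
  qed
  finally show ?thesis .
qed

lemma sum_lessThan_add_split: "(\<Sum>j<p+q. f j) = (\<Sum>j<p. f j) + (\<Sum>j<q. f (j + p))"
  for f :: "nat \<Rightarrow> real"
proof (induction q)
  case (Suc q)
  then show ?case by (simp add: add.commute)
qed simp

section \<open>First passages of a QBD\<close>

lemma qbd_step_eq_0: "d \<noteq> -1 \<Longrightarrow> d \<noteq> 0 \<Longrightarrow> d \<noteq> 1 \<Longrightarrow> qbd_step Lm L0 L1 d a b = 0"
  by (simp add: qbd_step_def)

locale qbd =
  fixes n :: nat and Lm L0 L1 :: "real mat"
begin

text \<open>Taboo probabilities of the chain started in level \<open>m\<close>, with levels as naturals, so that the
  taboo level \<open>-1\<close> cannot be visited: \<open>taboo k m i l j\<close> is the probability of being in level \<open>l\<close>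
  and phase \<open>j\<close> after \<open>k\<close> steps.\<close>

fun taboo :: "nat \<Rightarrow> nat \<Rightarrow> nat \<Rightarrow> nat \<Rightarrow> nat \<Rightarrow> real" where
  "taboo 0 m i l j = (if l = m \<and> i = j then 1 else 0)"
| "taboo (Suc k) m i l j =
     (\<Sum>l'\<le>m+k. \<Sum>j'<n. taboo k m i l' j' * qbd_step Lm L0 L1 (int l - int l') j' j)"

lemma qbd_taboo_eq_taboo:
  "qbd_taboo Lm L0 L1 n k i l j = (if l < 0 then 0 else taboo k 0 i (nat l) j)"
proof (induction k arbitrary: l j)
  case 0
  then show ?case by auto
next
  case (Suc k)
  show ?case
  proof (cases "l < 0")
    case False
    have "qbd_taboo Lm L0 L1 n (Suc k) i l j =
      (\<Sum>l'\<in>int ` {0..k}. \<Sum>j'<n. qbd_taboo Lm L0 L1 n k i l' j' * qbd_step Lm L0 L1 (l - l') j' j)"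
      using False by (simp add: image_int_atLeastAtMost)
    also have "\<dots> = (\<Sum>l'\<le>k. \<Sum>j'<n. taboo k 0 i l' j' * qbd_step Lm L0 L1 (int (nat l) - int l') j' j)"
      using False by (subst sum.reindex) (auto simp: Suc.IH atLeast0AtMost)
    finally show ?thesis using False by simp
  qed simp
qed

lemma taboo_eq_0_above: "m + k < l \<Longrightarrow> taboo k m i l j = 0"
proof (induction k arbitrary: l j)
  case (Suc k)
  then have "qbd_step Lm L0 L1 (int l - int l') j' j = 0" if "l' \<le> m + k" for l' j'
    using that by (intro qbd_step_eq_0) auto
  then show ?case by simp
qed simp

text \<open>The defining recursion of \<open>taboo\<close> conditions on the last step; this is the
  equivalent recursion conditioning on the first step.\<close>

lemma taboo_Suc_first_step:
  assumes "i < n" "j < n"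
  shows "taboo (Suc k) m i l j =
     (\<Sum>m'\<le>m+1. \<Sum>i'<n. qbd_step Lm L0 L1 (int m' - int m) i i' * taboo k m' i' l j)"
  using assms
proof (induction k arbitrary: m i l j)
  case 0
  have inner: "(\<Sum>j'<n. taboo 0 m i l' j' * qbd_step Lm L0 L1 (int l - int l') j' j)
      = (if l' = m then qbd_step Lm L0 L1 (int l - int m) i j else 0)" for l'
  proof -
    have "(\<Sum>j'<n. taboo 0 m i l' j' * qbd_step Lm L0 L1 (int l - int l') j' j)
       = (\<Sum>j'<n. if j' = i then (if l' = m then qbd_step Lm L0 L1 (int l - int l') i j else 0) else 0)"
      by (intro sum.cong refl) auto
    then show ?thesis using 0 by (simp add: sum.delta)
  qed
  have L: "taboo (Suc 0) m i l j = qbd_step Lm L0 L1 (int l - int m) i j"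
    by (simp only: taboo.simps(2) inner) (simp add: sum.delta)
  have R: "(\<Sum>m'\<le>m+1. \<Sum>i'<n. qbd_step Lm L0 L1 (int m' - int m) i i' * taboo 0 m' i' l j)
        = (\<Sum>m'\<le>m+1. if m' = l then qbd_step Lm L0 L1 (int l - int m) i j else 0)"
  proof (intro sum.cong refl)
    fix m'
    have "(\<Sum>i'<n. qbd_step Lm L0 L1 (int m' - int m) i i' * taboo 0 m' i' l j)
       = (\<Sum>i'<n. if i' = j then (if m' = l then qbd_step Lm L0 L1 (int l - int m) i j else 0) else 0)"
      by (intro sum.cong refl) auto
    then show "(\<Sum>i'<n. qbd_step Lm L0 L1 (int m' - int m) i i' * taboo 0 m' i' l j) =
         (if m' = l then qbd_step Lm L0 L1 (int l - int m) i j else 0)" using 0 by (simp add: sum.delta)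
  qed
  show ?case
  proof (cases "l \<le> m + 1")
    case False
    then have "qbd_step Lm L0 L1 (int l - int m) i j = 0" by (intro qbd_step_eq_0) auto
    then show ?thesis using L R False by (simp add: sum.delta)
  qed (use L R in \<open>simp add: sum.delta\<close>)
next
  case (Suc k)
  let ?S = "qbd_step Lm L0 L1"
  have "taboo (Suc (Suc k)) m i l j =
     (\<Sum>l'\<le>m+Suc k. \<Sum>j'<n. taboo (Suc k) m i l' j' * ?S (int l - int l') j' j)"
    by simp
  also have "\<dots> = (\<Sum>l'\<le>m+Suc k. \<Sum>j'<n. (\<Sum>m'\<le>m+1. \<Sum>i'<n. ?S (int m' - int m) i i' * taboo k m' i' l' j') * ?S (int l - int l') j' j)"
  proof (intro sum.cong refl)
    fix l' j' assume "j' \<in> {..<n}"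
    then show "taboo (Suc k) m i l' j' * ?S (int l - int l') j' j =
      (\<Sum>m'\<le>m+1. \<Sum>i'<n. ?S (int m' - int m) i i' * taboo k m' i' l' j') * ?S (int l - int l') j' j"
      using Suc.prems by (subst Suc.IH) auto
  qed
  also have "\<dots> = (\<Sum>m'\<le>m+1. \<Sum>i'<n. ?S (int m' - int m) i i' * (\<Sum>l'\<le>m+Suc k. \<Sum>j'<n. taboo k m' i' l' j' * ?S (int l - int l') j' j))"
    by (rule sum_swap_factor_nested)
  also have "\<dots> = (\<Sum>m'\<le>m+1. \<Sum>i'<n. ?S (int m' - int m) i i' * taboo (Suc k) m' i' l j)"
  proof (intro sum.cong refl arg_cong2[where f="(*)"])
    fix m' i' assume m': "m' \<in> {..m+1}"
    have "(\<Sum>l'\<le>m'+k. \<Sum>j'<n. taboo k m' i' l' j' * ?S (int l - int l') j' j)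
      = (\<Sum>l'\<le>m+Suc k. \<Sum>j'<n. taboo k m' i' l' j' * ?S (int l - int l') j' j)"
      using m' by (intro sum.mono_neutral_left) (auto simp: taboo_eq_0_above)
    then show "(\<Sum>l'\<le>m+Suc k. \<Sum>j'<n. taboo k m' i' l' j' * ?S (int l - int l') j' j) = taboo (Suc k) m' i' l j"
      by simp
  qed
  finally show ?case .
qed

lemma sum_qbd_step_levels:
  "(\<Sum>m'\<le>m+1. \<Sum>i'<n. qbd_step Lm L0 L1 (int m' - int m) i i' * h m' i')
   = (if m \<ge> 1 then (\<Sum>i'<n. Lm $$ (i,i') * h (m-1) i') else 0)
     + (\<Sum>i'<n. L0 $$ (i,i') * h m i') + (\<Sum>i'<n. L1 $$ (i,i') * h (m+1) i')"
proof -
  let ?g = "\<lambda>m'. \<Sum>i'<n. qbd_step Lm L0 L1 (int m' - int m) i i' * h m' i'"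
  define S where "S = (if m \<ge> 1 then {m-1, m, m+1} else {m, m+1})"
  have "sum ?g {..m+1} = sum ?g S"
  proof (rule sum.mono_neutral_right)
    show "\<forall>m'\<in>{..m+1} - S. ?g m' = 0"
    proof
      fix m' assume "m' \<in> {..m+1} - S"
      then have "int m' - int m \<noteq> -1" "int m' - int m \<noteq> 0" "int m' - int m \<noteq> 1"
        by (auto simp: S_def split: if_splits)
      then show "?g m' = 0" by (simp add: qbd_step_eq_0)
    qed
  qed (auto simp: S_def)
  also have "\<dots> = (if m \<ge> 1 then (\<Sum>i'<n. Lm $$ (i,i') * h (m-1) i') else 0)
     + (\<Sum>i'<n. L0 $$ (i,i') * h m i') + (\<Sum>i'<n. L1 $$ (i,i') * h (m+1) i')"
  proof (cases "m \<ge> 1")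
    case True
    then have d: "int (m - 1) - int m = -1" by simp
    have n1: "m - 1 \<notin> {m, m+1}" "m \<notin> {m+1}" using True by auto
    have "sum ?g {m-1, m, m+1} = ?g (m-1) + ?g m + ?g (m+1)"
      by (simp only: sum.insert[OF _ n1(1)] sum.insert[OF _ n1(2)] finite.intros sum.empty) simp
    then show ?thesis using True unfolding S_def by (simp add: d qbd_step_def)
  next
    case False
    then show ?thesis unfolding S_def by (simp add: qbd_step_def)
  qed
  finally show ?thesis .
qed

text \<open>\<open>passage k m i j\<close>: the probability that the chain started in level \<open>m\<close> and phase \<open>i\<close>
  first enters level \<open>-1\<close> at step \<open>k\<close>, in phase \<open>j\<close>.\<close>

definition passage :: "nat \<Rightarrow> nat \<Rightarrow> nat \<Rightarrow> nat \<Rightarrow> real" where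
  "passage k m i j = (case k of 0 \<Rightarrow> 0 | Suc k' \<Rightarrow> \<Sum>j'<n. taboo k' m i 0 j' * Lm $$ (j',j))"

lemma passage_0[simp]: "passage 0 m i j = 0"
  by (simp add: passage_def)

lemma passage_Suc:
  assumes "i < n" "j < n"
  shows "passage (Suc k) m i j =
    (if k = 0 \<and> m = 0 then Lm $$ (i,j) else 0)
    + (if m \<ge> 1 then (\<Sum>i'<n. Lm $$ (i,i') * passage k (m-1) i' j) else 0)
    + (\<Sum>i'<n. L0 $$ (i,i') * passage k m i' j)
    + (\<Sum>i'<n. L1 $$ (i,i') * passage k (m+1) i' j)"
proof (cases k)
  case 0
  have "passage (Suc 0) m i j = (\<Sum>j'<n. taboo 0 m i 0 j' * Lm $$ (j',j))"
    by (simp add: passage_def)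
  also have "\<dots> = (\<Sum>j'<n. if j' = i then (if m = 0 then Lm $$ (i,j) else 0) else 0)"
    by (intro sum.cong refl) auto
  finally show ?thesis using 0 assms by (simp add: sum.delta)
next
  case (Suc k')
  let ?S = "qbd_step Lm L0 L1"
  have "passage (Suc k) m i j = (\<Sum>j'<n. taboo (Suc k') m i 0 j' * Lm $$ (j',j))"
    using Suc by (simp add: passage_def)
  also have "\<dots> = (\<Sum>j'<n. (\<Sum>m'\<le>m+1. \<Sum>i'<n. ?S (int m' - int m) i i' * taboo k' m' i' 0 j') * Lm $$ (j',j))"
    using assms by (intro sum.cong refl) (subst taboo_Suc_first_step, auto)
  also have "\<dots> = (\<Sum>u\<in>{()}. \<Sum>j'<n. (\<Sum>m'\<le>m+1. \<Sum>i'<n. ?S (int m' - int m) i i' * taboo k' m' i' 0 j') * Lm $$ (j',j))"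
    by simp
  also have "\<dots> = (\<Sum>m'\<le>m+1. \<Sum>i'<n. ?S (int m' - int m) i i' * (\<Sum>u\<in>{()}. \<Sum>j'<n. taboo k' m' i' 0 j' * Lm $$ (j',j)))"
    by (rule sum_swap_factor_nested)
  also have "\<dots> = (\<Sum>m'\<le>m+1. \<Sum>i'<n. ?S (int m' - int m) i i' * passage k m' i' j)"
    using Suc by (simp add: passage_def)
  also have "\<dots> = (if m \<ge> 1 then (\<Sum>i'<n. Lm $$ (i,i') * passage k (m-1) i' j) else 0)
    + (\<Sum>i'<n. L0 $$ (i,i') * passage k m i' j)
    + (\<Sum>i'<n. L1 $$ (i,i') * passage k (m+1) i' j)"
    by (rule sum_qbd_step_levels)
  finally show ?thesis using Suc by simp
qed

lemma qbd_G_eq_suminf_passage: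
  assumes "i < n" "j < n"
  shows "qbd_G n Lm L0 L1 $$ (i,j) = (\<Sum>k. passage k 0 i j)"
proof -
  have "qbd_G n Lm L0 L1 $$ (i,j) = (\<Sum>k. passage (Suc k) 0 i j)"
    using assms unfolding qbd_G_def by (simp add: passage_def qbd_taboo_eq_taboo)
  also have "\<dots> = (\<Sum>k. passage k 0 i j)"
  proof -
    \<comment> \<open>no summability is needed, the dropped term being \<open>passage 0 0 i j = 0\<close>\<close>
    have "(\<lambda>k. passage (Suc k) 0 i j) sums s \<longleftrightarrow> (\<lambda>k. passage k 0 i j) sums s" for s
      using sums_Suc_iff[where f="\<lambda>k. passage k 0 i j"] by simp
    then show ?thesis by (simp add: suminf_def)
  qed
  finally show ?thesis .
qed

text \<open>Level homogeneity: to pass from level \<open>m + 1\<close> to \<open>-1\<close>, the chain first passes from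
  \<open>m + 1\<close> to \<open>m\<close>, which takes as long as passing from \<open>0\<close> to \<open>-1\<close>.\<close>

lemma passage_Suc_level:
  assumes "i < n" "j < n"
  shows "passage k (Suc m) i j = (\<Sum>a\<le>k. \<Sum>r<n. passage a 0 i r * passage (k - a) m r j)"
  using assms
proof (induction k arbitrary: m i j rule: less_induct)
  case (less k)
  let ?D = "passage"
  show ?case
  proof (cases k)
    case (Suc k')
    have ij: "i < n" "j < n" using less.prems by auto
    have IH: "\<And>a m i j. a \<le> k' \<Longrightarrow> i < n \<Longrightarrow> j < n \<Longrightarrow>
        ?D a (Suc m) i j = (\<Sum>b\<le>a. \<Sum>r<n. ?D b 0 i r * ?D (a - b) m r j)"
      using less.IH Suc by auto
    have "(\<Sum>a\<le>k. \<Sum>r<n. ?D a 0 i r * ?D (k - a) m r j)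
        = (\<Sum>a\<le>k'. \<Sum>r<n. ?D (Suc a) 0 i r * ?D (k' - a) m r j)"
      unfolding Suc by (subst sum.atMost_Suc_shift) simp
    also have "\<dots> = (\<Sum>a\<le>k'. \<Sum>r<n. ((if a = 0 then Lm $$ (i,r) else 0)
         + (\<Sum>i'<n. L0 $$ (i,i') * ?D a 0 i' r) + (\<Sum>i'<n. L1 $$ (i,i') * ?D a (Suc 0) i' r)) * ?D (k' - a) m r j)"
      using ij by (intro sum.cong refl) (simp add: passage_Suc)
    also have "\<dots> = (\<Sum>a\<le>k'. \<Sum>r<n. (if a = 0 then Lm $$ (i,r) else 0) * ?D (k' - a) m r j)
        + (\<Sum>a\<le>k'. \<Sum>r<n. (\<Sum>i'<n. L0 $$ (i,i') * ?D a 0 i' r) * ?D (k' - a) m r j)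
        + (\<Sum>a\<le>k'. \<Sum>r<n. (\<Sum>i'<n. L1 $$ (i,i') * ?D a (Suc 0) i' r) * ?D (k' - a) m r j)"
      by (simp add: distrib_right sum.distrib)
    also have "(\<Sum>a\<le>k'. \<Sum>r<n. (if a = 0 then Lm $$ (i,r) else 0) * ?D (k' - a) m r j)
        = (\<Sum>i'<n. Lm $$ (i,i') * ?D k' m i' j)"
    proof -
      have "(\<Sum>a\<le>k'. \<Sum>r<n. (if a = 0 then Lm $$ (i,r) else 0) * ?D (k' - a) m r j)
         = (\<Sum>a\<le>k'. if a = 0 then (\<Sum>r<n. Lm $$ (i,r) * ?D (k' - a) m r j) else 0)"
        by (intro sum.cong refl) auto
      then show ?thesis by (simp add: sum.delta)
    qed
    also have "(\<Sum>a\<le>k'. \<Sum>r<n. (\<Sum>i'<n. L0 $$ (i,i') * ?D a 0 i' r) * ?D (k' - a) m r j)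
        = (\<Sum>i'<n. L0 $$ (i,i') * ?D k' (Suc m) i' j)"
    proof -
      have "(\<Sum>a\<le>k'. \<Sum>r<n. (\<Sum>i'<n. L0 $$ (i,i') * ?D a 0 i' r) * ?D (k' - a) m r j)
          = (\<Sum>i'<n. L0 $$ (i,i') * (\<Sum>a\<le>k'. \<Sum>r<n. ?D a 0 i' r * ?D (k' - a) m r j))"
        by (simp add: sum_distrib_right mult.assoc sum_swap_factor)
      also have "\<dots> = (\<Sum>i'<n. L0 $$ (i,i') * ?D k' (Suc m) i' j)"
        using IH ij by (intro sum.cong refl) auto
      finally show ?thesis .
    qed
    also have "(\<Sum>a\<le>k'. \<Sum>r<n. (\<Sum>i'<n. L1 $$ (i,i') * ?D a (Suc 0) i' r) * ?D (k' - a) m r j)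
        = (\<Sum>i'<n. L1 $$ (i,i') * ?D k' (Suc (Suc m)) i' j)"
    proof -
      have "(\<Sum>a\<le>k'. \<Sum>r<n. (\<Sum>i'<n. L1 $$ (i,i') * ?D a (Suc 0) i' r) * ?D (k' - a) m r j)
          = (\<Sum>i'<n. L1 $$ (i,i') * (\<Sum>a\<le>k'. \<Sum>r<n. ?D a (Suc 0) i' r * ?D (k' - a) m r j))"
        by (simp add: sum_distrib_right mult.assoc sum_swap_factor)
      also have "\<dots> = (\<Sum>i'<n. L1 $$ (i,i') * ?D k' (Suc (Suc m)) i' j)"
      proof (rule sum.cong[OF refl])
        fix i' assume i': "i' \<in> {..<n}"
        have "(\<Sum>a\<le>k'. \<Sum>r<n. ?D a (Suc 0) i' r * ?D (k' - a) m r j)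
           = (\<Sum>a\<le>k'. \<Sum>r<n. (\<Sum>c\<le>a. \<Sum>s<n. ?D c 0 i' s * ?D (a - c) 0 s r) * ?D (k' - a) m r j)"
          using IH i' by (intro sum.cong refl) auto
        also have "\<dots> = (\<Sum>c\<le>k'. \<Sum>s<n. ?D c 0 i' s * (\<Sum>b\<le>k' - c. \<Sum>r<n. ?D b 0 s r * ?D (k' - c - b) m r j))"
          by (rule sum_convolution_assoc)
        also have "\<dots> = (\<Sum>c\<le>k'. \<Sum>s<n. ?D c 0 i' s * ?D (k' - c) (Suc m) s j)"
          using IH ij by (intro sum.cong refl) auto
        also have "\<dots> = ?D k' (Suc (Suc m)) i' j"
          using IH ij i' by auto
        finally show "L1 $$ (i,i') * (\<Sum>a\<le>k'. \<Sum>r<n. ?D a (Suc 0) i' r * ?D (k' - a) m r j)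
            = L1 $$ (i,i') * ?D k' (Suc (Suc m)) i' j"
          by simp
      qed
      finally show ?thesis .
    qed
    finally show ?thesis using Suc ij passage_Suc[OF ij, where k=k' and m="Suc m"] by simp
  qed simp
qed

definition passage_sum :: "nat \<Rightarrow> nat \<Rightarrow> nat \<Rightarrow> nat \<Rightarrow> real" where
  "passage_sum N m i j = (\<Sum>k<N. passage k m i j)"

lemma passage_sum_Suc:
  assumes "i < n" "j < n"
  shows "passage_sum (Suc N) m i j =
    (if N > 0 \<and> m = 0 then Lm $$ (i,j) else 0)
    + (if m \<ge> 1 then (\<Sum>i'<n. Lm $$ (i,i') * passage_sum N (m-1) i' j) else 0)
    + (\<Sum>i'<n. L0 $$ (i,i') * passage_sum N m i' j)
    + (\<Sum>i'<n. L1 $$ (i,i') * passage_sum N (m+1) i' j)"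
proof -
  have "passage_sum (Suc N) m i j = (\<Sum>k<N. passage (Suc k) m i j)"
    unfolding passage_sum_def by (subst sum.lessThan_Suc_shift) simp
  also have "\<dots> = (\<Sum>k<N. (if k = 0 \<and> m = 0 then Lm $$ (i,j) else 0))
    + (\<Sum>k<N. (if m \<ge> 1 then (\<Sum>i'<n. Lm $$ (i,i') * passage k (m-1) i' j) else 0))
    + (\<Sum>k<N. (\<Sum>i'<n. L0 $$ (i,i') * passage k m i' j))
    + (\<Sum>k<N. (\<Sum>i'<n. L1 $$ (i,i') * passage k (m+1) i' j))"
    using assms by (simp add: passage_Suc sum.distrib)
  also have "(\<Sum>k<N. (if k = 0 \<and> m = 0 then Lm $$ (i,j) else 0)) = (if N > 0 \<and> m = 0 then Lm $$ (i,j) else 0)"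
    by (cases "m = 0") (auto simp: sum.delta')
  also have "(\<Sum>k<N. (if m \<ge> 1 then (\<Sum>i'<n. Lm $$ (i,i') * passage k (m-1) i' j) else 0))
    = (if m \<ge> 1 then (\<Sum>i'<n. Lm $$ (i,i') * passage_sum N (m-1) i' j) else 0)"
    unfolding passage_sum_def by (cases "m \<ge> 1") (simp_all add: sum_swap_factor)
  finally show ?thesis
    unfolding passage_sum_def by (simp add: sum_swap_factor)
qed

definition passages_summable :: bool where
  "passages_summable \<longleftrightarrow> (\<forall>i<n. \<forall>j<n. summable (\<lambda>k. passage k 0 i j))"

lemma qbd_G_col_eq_0:
  assumes "\<forall>r<n. Lm $$ (r,j) = 0" "i < n" "j < n"
  shows "qbd_G n Lm L0 L1 $$ (i,j) = 0"
  using assms unfolding qbd_G_def by simp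

end

locale nonneg_qbd = qbd +
  assumes carrier: "Lm \<in> carrier_mat n n" "L0 \<in> carrier_mat n n" "L1 \<in> carrier_mat n n"
    and nonneg: "nonneg_mat Lm" "nonneg_mat L0" "nonneg_mat L1"
begin

lemma blocks_nonneg:
  assumes "i < n" "j < n"
  shows "Lm $$ (i,j) \<ge> 0" "L0 $$ (i,j) \<ge> 0" "L1 $$ (i,j) \<ge> 0"
  using assms carrier nonneg unfolding nonneg_mat_def by auto

lemma passage_nonneg:
  assumes "i < n" "j < n"
  shows "passage k m i j \<ge> 0"
  using assms
proof (induction k arbitrary: m i j)
  case (Suc k)
  have "Lm $$ (i,i') * passage k (m-1) i' j \<ge> 0" "L0 $$ (i,i') * passage k m i' j \<ge> 0"
    "L1 $$ (i,i') * passage k (m+1) i' j \<ge> 0" if "i' < n" for i'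
    using that Suc blocks_nonneg by simp_all
  then show ?case
    using Suc.prems blocks_nonneg[OF Suc.prems]
    unfolding passage_Suc[OF Suc.prems] by (auto intro!: add_nonneg_nonneg sum_nonneg)
qed simp

lemma passage_sum_nonneg: "i < n \<Longrightarrow> j < n \<Longrightarrow> passage_sum N m i j \<ge> 0"
  unfolding passage_sum_def by (simp add: passage_nonneg sum_nonneg)

lemma passage_sum_row_le_1:
  assumes substochastic: "\<forall>i<n. (\<Sum>j<n. Lm $$ (i,j) + L0 $$ (i,j) + L1 $$ (i,j)) \<le> 1"
    and "i < n"
  shows "(\<Sum>j<n. passage_sum N m i j) \<le> 1"
  using assms(2)
proof (induction N arbitrary: m i)
  case 0
  then show ?case by (simp add: passage_sum_def)
next
  case (Suc N)
  have weighted: "(\<Sum>i'<n. A $$ (i,i') * (\<Sum>j<n. passage_sum N m' i' j)) \<le> (\<Sum>i'<n. A $$ (i,i'))"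
    if "\<And>i'. i' < n \<Longrightarrow> A $$ (i,i') \<ge> 0" for A m'
    by (intro sum_mono mult_right_le_one_le) (auto simp: that Suc.IH intro!: sum_nonneg passage_sum_nonneg)
  have "(\<Sum>j<n. passage_sum (Suc N) m i j) =
    (\<Sum>j<n. (if N > 0 \<and> m = 0 then Lm $$ (i,j) else 0))
    + (if m \<ge> 1 then (\<Sum>i'<n. Lm $$ (i,i') * (\<Sum>j<n. passage_sum N (m-1) i' j)) else 0)
    + (\<Sum>i'<n. L0 $$ (i,i') * (\<Sum>j<n. passage_sum N m i' j))
    + (\<Sum>i'<n. L1 $$ (i,i') * (\<Sum>j<n. passage_sum N (m+1) i' j))"
    using Suc.prems by (simp add: passage_sum_Suc sum.distrib sum_swap_factor)
  also have "\<dots> \<le> (\<Sum>j<n. Lm $$ (i,j)) + (\<Sum>j<n. L0 $$ (i,j)) + (\<Sum>j<n. L1 $$ (i,j))"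
  proof -
    have "(\<Sum>j<n. (if N > 0 \<and> m = 0 then Lm $$ (i,j) else 0))
      + (if m \<ge> 1 then (\<Sum>i'<n. Lm $$ (i,i') * (\<Sum>j<n. passage_sum N (m-1) i' j)) else 0)
      \<le> (\<Sum>j<n. Lm $$ (i,j))"
    proof (cases "m = 0")
      case True
      then show ?thesis using blocks_nonneg Suc.prems by (auto intro!: sum_mono)
    next
      case False
      then show ?thesis using weighted[of Lm "m-1"] blocks_nonneg Suc.prems by simp
    qed
    then show ?thesis using weighted[of L0 m] weighted[of L1 "m+1"] blocks_nonneg Suc.prems by fastforce
  qed
  also have "\<dots> \<le> 1" using substochastic Suc.prems by (simp add: sum.distrib)
  finally show ?case .
qed

text \<open>The source of the minimality of the \<open>\<G>\<close>-matrix among nonnegative supersolutions.\<close>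

lemma passage_sum_le_pow:
  assumes X: "X \<in> carrier_mat n n" "nonneg_mat X"
    and super: "le_mat (Lm + L0 * X + L1 * (X * X)) X"
    and "i < n" "j < n"
  shows "passage_sum N m i j \<le> (X ^\<^sub>m (m+1)) $$ (i,j)"
  using assms(4,5)
proof (induction N arbitrary: m i j)
  case 0
  then show ?case using nonneg_mat_pow[OF X, of "m+1"] X unfolding nonneg_mat_def passage_sum_def by simp
next
  case (Suc N)
  note c = carrier X(1)
  let ?Y = "\<lambda>m. X ^\<^sub>m (m+1)"
  have ij: "i < n" "j < n" using Suc.prems by auto
  have weighted: "(\<Sum>i'<n. A $$ (i,i') * passage_sum N m' i' j) \<le> (\<Sum>i'<n. A $$ (i,i') * ?Y m' $$ (i',j))"
    if "\<And>i'. i' < n \<Longrightarrow> A $$ (i,i') \<ge> 0" for A m'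
    using that Suc.IH ij by (intro sum_mono mult_left_mono) auto
  have "passage_sum (Suc N) m i j \<le>
    (if m = 0 then Lm $$ (i,j) else 0)
    + (if m \<ge> 1 then (\<Sum>i'<n. Lm $$ (i,i') * ?Y (m-1) $$ (i',j)) else 0)
    + (\<Sum>i'<n. L0 $$ (i,i') * ?Y m $$ (i',j))
    + (\<Sum>i'<n. L1 $$ (i,i') * ?Y (m+1) $$ (i',j))"
  proof -
    have "(if N > 0 \<and> m = 0 then Lm $$ (i,j) else 0)
      + (if m \<ge> 1 then (\<Sum>i'<n. Lm $$ (i,i') * passage_sum N (m-1) i' j) else 0)
      \<le> (if m = 0 then Lm $$ (i,j) else 0)
      + (if m \<ge> 1 then (\<Sum>i'<n. Lm $$ (i,i') * ?Y (m-1) $$ (i',j)) else 0)"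
      using weighted[of Lm "m - 1"] blocks_nonneg ij by (cases m) auto
    then show ?thesis
      using weighted[of L0 m] weighted[of L1 "m+1"] blocks_nonneg ij
      unfolding passage_sum_Suc[OF ij] by fastforce
  qed
  also have "\<dots> = ((Lm + L0 * X + L1 * (X * X)) * X ^\<^sub>m m) $$ (i,j)"
  proof -
    have "(Lm + L0 * X + L1 * (X * X)) * X ^\<^sub>m m = (Lm + L0 * X) * X ^\<^sub>m m + (L1 * (X * X)) * X ^\<^sub>m m"
      using c by (intro add_mult_distrib_mat) auto
    also have "(Lm + L0 * X) * X ^\<^sub>m m = Lm * X ^\<^sub>m m + (L0 * X) * X ^\<^sub>m m"
      using c by (intro add_mult_distrib_mat) auto
    also have "(L0 * X) * X ^\<^sub>m m = L0 * (X * X ^\<^sub>m m)"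
      using c by (intro assoc_mult_mat) auto
    also have "(L1 * (X * X)) * X ^\<^sub>m m = L1 * (X * (X * X ^\<^sub>m m))"
      using c by (simp add: assoc_mult_mat[of _ n n _ n _ n])
    also have "X * (X * X ^\<^sub>m m) = ?Y (m+1)"
      using pow_mat_Suc_left[OF c(4)] by (metis Suc_eq_plus1)
    also have "X * X ^\<^sub>m m = ?Y m"
      using pow_mat_Suc_left[OF c(4)] by simp
    finally have split: "(Lm + L0 * X + L1 * (X * X)) * X ^\<^sub>m m = Lm * X ^\<^sub>m m + L0 * ?Y m + L1 * ?Y (m+1)" .
    have Lm_pow: "(Lm * X ^\<^sub>m m) $$ (i,j) = (if m = 0 then Lm $$ (i,j) else 0)
        + (if m \<ge> 1 then (\<Sum>i'<n. Lm $$ (i,i') * ?Y (m-1) $$ (i',j)) else 0)"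
      using c ij index_mult_mat_sum[OF c(1) pow_carrier_mat[OF c(4)] ij] by (cases m) (simp_all del: pow_mat.simps(2))
    show ?thesis
      unfolding split using c ij Lm_pow
      by (simp del: pow_mat.simps(2) add: index_mult_mat_sum[OF c(2) pow_carrier_mat[OF c(4)] ij]
          index_mult_mat_sum[OF c(3) pow_carrier_mat[OF c(4)] ij])
  qed
  also have "\<dots> \<le> (X * X ^\<^sub>m m) $$ (i,j)"
    using le_mat_mult_right[OF _ c(4) pow_carrier_mat[OF c(4)] nonneg_mat_pow[OF X] super] c ij
    unfolding le_mat_def by auto
  also have "\<dots> = ?Y m $$ (i,j)" using pow_mat_Suc_left[OF c(4)] by simp
  finally show ?case .
qed

lemma passages_summable_if_supersolution:
  assumes "X \<in> carrier_mat n n" "nonneg_mat X" "le_mat (Lm + L0 * X + L1 * (X * X)) X"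
  shows passages_summable
  unfolding passages_summable_def
proof (intro allI impI)
  fix i j assume ij: "i < n" "j < n"
  have "(\<Sum>k<N. passage k 0 i j) \<le> X $$ (i,j)" for N
    using passage_sum_le_pow[OF assms ij, of N 0] assms(1) unfolding passage_sum_def by simp
  then show "summable (\<lambda>k. passage k 0 i j)"
    using passage_nonneg[OF ij] by (intro summableI_nonneg_bounded)
qed

lemma passages_summable_if_substochastic:
  assumes "\<forall>i<n. (\<Sum>j<n. Lm $$ (i,j) + L0 $$ (i,j) + L1 $$ (i,j)) \<le> 1"
  shows passages_summable
  unfolding passages_summable_def
proof (intro allI impI)
  fix i j assume ij: "i < n" "j < n"
  have "passage_sum N 0 i j \<le> (\<Sum>j<n. passage_sum N 0 i j)" for N
    using ij passage_sum_nonneg[OF ij(1)] by (intro member_le_sum) auto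
  then have "(\<Sum>k<N. passage k 0 i j) \<le> 1" for N
    using passage_sum_row_le_1[OF assms ij(1)] unfolding passage_sum_def by (meson order_trans)
  then show "summable (\<lambda>k. passage k 0 i j)"
    using passage_nonneg[OF ij] by (intro summableI_nonneg_bounded)
qed

abbreviation G :: "real mat" where
  "G \<equiv> qbd_G n Lm L0 L1"

lemma passage_level_1_sums:
  assumes summable: passages_summable and "r < n" "j < n"
  shows "(\<lambda>k. passage k 1 r j) sums (\<Sum>s<n. G $$ (r,s) * G $$ (s,j))"
proof -
  have summ: "summable (\<lambda>k. passage k 0 i j)" if "i < n" "j < n" for i j
    using summable that unfolding passages_summable_def by auto
  have conv: "passage k 1 r j = (\<Sum>s<n. \<Sum>a\<le>k. passage a 0 r s * passage (k - a) 0 s j)" for k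
    using passage_Suc_level[OF assms(2,3), where k=k and m=0] by (simp add: sum.swap[of _ "{..k}"])
  have "(\<lambda>k. \<Sum>a\<le>k. passage a 0 r s * passage (k - a) 0 s j) sums
      ((\<Sum>k. passage k 0 r s) * (\<Sum>k. passage k 0 s j))" if "s < n" for s
    using that assms passage_nonneg summ by (intro Cauchy_product_sums) auto
  then have "(\<lambda>k. passage k 1 r j) sums (\<Sum>s<n. (\<Sum>k. passage k 0 r s) * (\<Sum>k. passage k 0 s j))"
    unfolding conv by (intro sums_sum) auto
  then show ?thesis
    using assms by (simp add: qbd_G_eq_suminf_passage)
qed

lemma qbd_G_fixpoint:
  assumes passages_summable
  shows "G = Lm + L0 * G + L1 * (G * G)"
proof (rule eq_matI)
  have cG: "G \<in> carrier_mat n n" unfolding qbd_G_def by simp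
  note c = carrier cG
  fix i j assume "i < dim_row (Lm + L0 * G + L1 * (G * G))" "j < dim_col (Lm + L0 * G + L1 * (G * G))"
  then have ij: "i < n" "j < n" using c by auto
  have summ: "summable (\<lambda>k. passage k 0 i j)" if "i < n" "j < n" for i j
    using assms that unfolding passages_summable_def by auto
  have first_step: "passage (Suc k) 0 i j = (if k = 0 then Lm $$ (i,j) else 0)
     + (\<Sum>r<n. L0 $$ (i,r) * passage k 0 r j) + (\<Sum>r<n. L1 $$ (i,r) * passage k 1 r j)" for k
    using passage_Suc[OF ij, where k=k and m=0] by simp
  have "(\<lambda>k. passage (Suc k) 0 i j) sums (Lm $$ (i,j) + (\<Sum>r<n. L0 $$ (i,r) * G $$ (r,j))
      + (\<Sum>r<n. L1 $$ (i,r) * (\<Sum>s<n. G $$ (r,s) * G $$ (s,j))))"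
    unfolding first_step
  proof (intro sums_add)
    show "(\<lambda>k. if k = 0 then Lm $$ (i,j) else 0) sums Lm $$ (i,j)"
      using sums_single[of 0 "\<lambda>_. Lm $$ (i,j)"] by simp
    show "(\<lambda>k. \<Sum>r<n. L0 $$ (i,r) * passage k 0 r j) sums (\<Sum>r<n. L0 $$ (i,r) * G $$ (r,j))"
      using summ ij by (intro sums_sum sums_mult) (auto simp: qbd_G_eq_suminf_passage summable_sums)
    show "(\<lambda>k. \<Sum>r<n. L1 $$ (i,r) * passage k 1 r j) sums (\<Sum>r<n. L1 $$ (i,r) * (\<Sum>s<n. G $$ (r,s) * G $$ (s,j)))"
      using passage_level_1_sums[OF assms] ij by (intro sums_sum sums_mult) auto
  qed
  then have "(\<lambda>k. passage k 0 i j) sums (Lm $$ (i,j) + (\<Sum>r<n. L0 $$ (i,r) * G $$ (r,j))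
      + (\<Sum>r<n. L1 $$ (i,r) * (\<Sum>s<n. G $$ (r,s) * G $$ (s,j))))"
    by (subst (asm) sums_Suc_iff) simp
  then have "G $$ (i,j) = Lm $$ (i,j) + (\<Sum>r<n. L0 $$ (i,r) * G $$ (r,j))
      + (\<Sum>r<n. L1 $$ (i,r) * (\<Sum>s<n. G $$ (r,s) * G $$ (s,j)))"
    using ij by (simp add: qbd_G_eq_suminf_passage sums_iff)
  also have "\<dots> = (Lm + L0 * G + L1 * (G * G)) $$ (i,j)"
    using c ij by (simp add: index_mult_mat_sum[OF c(2) c(4) ij] index_mult_mat_sum[OF c(3) _ ij]
        index_mult_mat_sum[OF c(4) c(4)])
  finally show "G $$ (i,j) = (Lm + L0 * G + L1 * (G * G)) $$ (i,j)" .
qed (use carrier in \<open>auto simp: qbd_G_def\<close>)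

lemma qbd_G_nonneg:
  assumes passages_summable
  shows "nonneg_mat G"
  unfolding nonneg_mat_def
proof (intro allI impI)
  fix i j assume "i < dim_row G" "j < dim_col G"
  then have ij: "i < n" "j < n" by (auto simp: qbd_G_def)
  show "G $$ (i,j) \<ge> 0"
    unfolding qbd_G_eq_suminf_passage[OF ij]
    using assms ij passage_nonneg by (intro suminf_nonneg) (auto simp: passages_summable_def)
qed

lemma qbd_G_le_supersolution:
  assumes "X \<in> carrier_mat n n" "nonneg_mat X" "le_mat (Lm + L0 * X + L1 * (X * X)) X"
  shows "le_mat G X"
  unfolding le_mat_def
proof (intro allI impI)
  fix i j assume "i < dim_row G" "j < dim_col G"
  then have ij: "i < n" "j < n" by (auto simp: qbd_G_def)
  have "(\<Sum>k<N. passage k 0 i j) \<le> X $$ (i,j)" for N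
    using passage_sum_le_pow[OF assms ij, of N 0] assms(1) unfolding passage_sum_def by simp
  then show "G $$ (i,j) \<le> X $$ (i,j)"
    using passages_summable_if_supersolution[OF assms] ij
    unfolding qbd_G_eq_suminf_passage[OF ij] passages_summable_def
    by (intro suminf_le_const) auto
qed

lemma qbd_G_row_sum_le_1:
  assumes substochastic: "\<forall>i<n. (\<Sum>j<n. Lm $$ (i,j) + L0 $$ (i,j) + L1 $$ (i,j)) \<le> 1"
    and "i < n"
  shows "(\<Sum>j<n. G $$ (i,j)) \<le> 1"
proof -
  have summ: "summable (\<lambda>k. passage k 0 i j)" if "j < n" for j
    using passages_summable_if_substochastic[OF substochastic] assms(2) that
    unfolding passages_summable_def by auto
  have "(\<Sum>j<n. G $$ (i,j)) = (\<Sum>j<n. \<Sum>k. passage k 0 i j)"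
    using assms(2) by (simp add: qbd_G_eq_suminf_passage)
  also have "\<dots> = (\<Sum>k. \<Sum>j<n. passage k 0 i j)"
    using summ by (intro suminf_sum[symmetric]) auto
  also have "\<dots> \<le> 1"
  proof (rule suminf_le_const)
    show "summable (\<lambda>k. \<Sum>j<n. passage k 0 i j)" using summ by (intro summable_sum) auto
    show "(\<Sum>k<N. \<Sum>j<n. passage k 0 i j) \<le> 1" for N
      using passage_sum_row_le_1[OF substochastic assms(2)] unfolding passage_sum_def
      by (subst sum.swap) simp
  qed
  finally show ?thesis .
qed

end

section \<open>Diagonally dominant Z-matrices\<close>

definition diag_dominant_Z_mat :: "nat \<Rightarrow> real mat \<Rightarrow> bool" where
  "diag_dominant_Z_mat k M \<longleftrightarrow> M \<in> carrier_mat k k \<and> (\<forall>i<k. \<forall>j<k. i \<noteq> j \<longrightarrow> M $$ (i,j) \<le> 0)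
     \<and> (\<forall>i<k. (\<Sum>j<k. M $$ (i,j)) > 0)"

text \<open>Minimum principle: at a row where a column of \<open>X\<close> attains its minimum, the sign of
  \<open>(M * X) $$ (i,j)\<close> is that of the minimum.\<close>

lemma diag_dominant_Z_mat_nonneg_if_mult_nonneg:
  assumes Z: "diag_dominant_Z_mat k M" and X: "X \<in> carrier_mat k c"
    and pos: "\<forall>i<k. \<forall>j<c. (M * X) $$ (i,j) \<ge> 0"
    and ij: "i < k" "j < c"
  shows "X $$ (i,j) \<ge> 0"
proof (rule ccontr)
  assume neg: "\<not> X $$ (i,j) \<ge> 0"
  have M: "M \<in> carrier_mat k k" using Z unfolding diag_dominant_Z_mat_def by auto
  obtain i0 where i0: "i0 < k" "\<forall>r<k. X $$ (i0,j) \<le> X $$ (r,j)"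
  proof -
    let ?col = "(\<lambda>r. X $$ (r,j)) ` {..<k}"
    have "Min ?col \<in> ?col" using ij by (intro Min_in) auto
    then obtain i0 where "i0 < k" "X $$ (i0,j) = Min ?col" by auto
    then show ?thesis using that by auto
  qed
  have xneg: "X $$ (i0,j) < 0" using i0 ij neg by force
  have "(M * X) $$ (i0,j) = (\<Sum>r<k. M $$ (i0,r) * X $$ (r,j))"
    using M X i0 ij by (simp add: index_mult_mat_sum)
  also have "\<dots> \<le> (\<Sum>r<k. M $$ (i0,r) * X $$ (i0,j))"
  proof (rule sum_mono)
    fix r assume r: "r \<in> {..<k}"
    show "M $$ (i0,r) * X $$ (r,j) \<le> M $$ (i0,r) * X $$ (i0,j)"
    proof (cases "r = i0")
      case False
      then have "M $$ (i0,r) \<le> 0" using Z r i0 unfolding diag_dominant_Z_mat_def by auto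
      then show ?thesis using i0 r by (intro mult_left_mono_neg) auto
    qed simp
  qed
  also have "\<dots> = (\<Sum>r<k. M $$ (i0,r)) * X $$ (i0,j)" by (simp add: sum_distrib_right)
  also have "\<dots> < 0" using Z i0 xneg unfolding diag_dominant_Z_mat_def by (intro mult_pos_neg) auto
  finally show False using pos i0 ij by force
qed

lemma diag_dominant_Z_mat_inverse:
  assumes Z: "diag_dominant_Z_mat k M"
  shows "M * minv M = 1\<^sub>m k" "minv M * M = 1\<^sub>m k" "minv M \<in> carrier_mat k k" "nonneg_mat (minv M)"
proof -
  have M: "M \<in> carrier_mat k k" using Z unfolding diag_dominant_Z_mat_def by auto
  have inj: "v = 0\<^sub>v k" if v: "v \<in> carrier_vec k" "M *\<^sub>v v = 0\<^sub>v k" for v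
  proof -
    define X where "X = mat k 1 (\<lambda>(i,_). v $ i)"
    have X: "X \<in> carrier_mat k 1" unfolding X_def by simp
    have MX: "(M * X) $$ (i,0) = 0" if "i < k" for i
    proof -
      have "(M * X) $$ (i,0) = (\<Sum>r<k. M $$ (i,r) * X $$ (r,0))"
        using M X that by (simp add: index_mult_mat_sum)
      also have "\<dots> = (\<Sum>r<k. M $$ (i,r) * v $ r)" unfolding X_def by simp
      also have "\<dots> = (M *\<^sub>v v) $ i" using M v(1) that by (simp add: scalar_prod_def atLeast0LessThan)
      finally show ?thesis using v that by simp
    qed
    have "X $$ (i,0) \<ge> 0" if "i < k" for i
      using diag_dominant_Z_mat_nonneg_if_mult_nonneg[OF Z X _ that] MX by simp
    moreover have "(- X) $$ (i,0) \<ge> 0" if "i < k" for i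
      using diag_dominant_Z_mat_nonneg_if_mult_nonneg[OF Z _ _ that, of "- X"] MX M X
      by (simp add: uminus_mult_right_mat)
    ultimately have "X $$ (i,0) = 0" if "i < k" for i using that X by force
    then show "v = 0\<^sub>v k" using v unfolding X_def by (intro eq_vecI) auto
  qed
  have "det M \<noteq> 0" using det_0_iff_vec_prod_zero_field[OF M] inj by auto
  then have "M \<in> Units (ring_mat TYPE(real) k ())" by (rule det_non_zero_imp_unit[OF M])
  then obtain B where B: "mat_inverse M = Some B"
    by (cases "mat_inverse M") (auto dest: mat_inverse(1)[OF M, where b="()"])
  have "minv M = B" unfolding minv_def B by simp
  then show MB: "M * minv M = 1\<^sub>m k" "minv M * M = 1\<^sub>m k" "minv M \<in> carrier_mat k k"
    using mat_inverse(2)[OF M B] by auto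
  show "nonneg_mat (minv M)"
    unfolding nonneg_mat_def using MB(3)
    by (auto intro!: diag_dominant_Z_mat_nonneg_if_mult_nonneg[OF Z MB(3)] simp: MB(1))
qed

definition subgenerator :: "nat \<Rightarrow> real mat \<Rightarrow> bool" where
  "subgenerator k S \<longleftrightarrow> S \<in> carrier_mat k k \<and> (\<forall>i<k. \<forall>j<k. i \<noteq> j \<longrightarrow> S $$ (i,j) \<ge> 0)
     \<and> (\<forall>i<k. (\<Sum>j<k. S $$ (i,j)) \<le> 0)"

lemma diag_dominant_Z_mat_one_minus_subgenerator:
  assumes S: "subgenerator k S" and a: "a \<ge> 0"
  shows "diag_dominant_Z_mat k (1\<^sub>m k - a \<cdot>\<^sub>m S)"
  unfolding diag_dominant_Z_mat_def
proof (intro conjI allI impI)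
  have cS: "S \<in> carrier_mat k k" using S unfolding subgenerator_def by auto
  then show "1\<^sub>m k - a \<cdot>\<^sub>m S \<in> carrier_mat k k" by auto
  fix i assume i: "i < k"
  {
    fix j assume "j < k" "i \<noteq> j"
    then show "(1\<^sub>m k - a \<cdot>\<^sub>m S) $$ (i,j) \<le> 0"
      using S cS i a unfolding subgenerator_def by simp
  }
  have "(\<Sum>j<k. (1\<^sub>m k - a \<cdot>\<^sub>m S) $$ (i,j)) = 1 - a * (\<Sum>j<k. S $$ (i,j))"
    using i cS by (simp add: sum_subtractf sum_distrib_left)
  moreover have "a * (\<Sum>j<k. S $$ (i,j)) \<le> 0"
    using S i a unfolding subgenerator_def by (simp add: mult_nonneg_nonpos)
  ultimately show "(\<Sum>j<k. (1\<^sub>m k - a \<cdot>\<^sub>m S) $$ (i,j)) > 0" by simp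
qed

text \<open>Leaving the states of \<open>Tpp\<close> through \<open>Tpm\<close> and returning through a substochastic \<open>A\<close>
  keeps the generator defective.\<close>

lemma subgenerator_plus_mult:
  assumes Tpp: "Tpp \<in> carrier_mat p p" and Tpm: "Tpm \<in> carrier_mat p q" and A: "A \<in> carrier_mat q p"
    and nonneg: "nonneg_mat Tpm" "nonneg_mat A"
    and off: "\<forall>i<p. \<forall>j<p. i \<noteq> j \<longrightarrow> Tpp $$ (i,j) \<ge> 0"
    and rows: "\<forall>i<p. (\<Sum>j<p. Tpp $$ (i,j)) + (\<Sum>j<q. Tpm $$ (i,j)) \<le> 0"
    and rows_A: "\<forall>r<q. (\<Sum>j<p. A $$ (r,j)) \<le> 1"
  shows "subgenerator p (Tpp + Tpm * A)"
  unfolding subgenerator_def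
proof (intro conjI allI impI)
  have TA: "Tpm * A \<in> carrier_mat p p" using Tpm A by auto
  have nTA: "nonneg_mat (Tpm * A)" using nonneg Tpm A by (intro nonneg_mat_mult) auto
  show "Tpp + Tpm * A \<in> carrier_mat p p" using Tpp TA by auto
  fix i assume i: "i < p"
  {
    fix j assume "j < p" "i \<noteq> j"
    then show "(Tpp + Tpm * A) $$ (i,j) \<ge> 0"
      using off nTA i Tpp TA Tpm A unfolding nonneg_mat_def by auto
  }
  have "(\<Sum>j<p. (Tpm * A) $$ (i,j)) = (\<Sum>r<q. Tpm $$ (i,r) * (\<Sum>j<p. A $$ (r,j)))"
    using Tpm A i by (simp add: index_mult_mat_sum sum_swap_factor)
  also have "\<dots> \<le> (\<Sum>r<q. Tpm $$ (i,r))"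
    using nonneg(1) Tpm i rows_A unfolding nonneg_mat_def by (intro sum_mono mult_left_le) auto
  moreover have "(\<Sum>j<p. (Tpp + Tpm * A) $$ (i,j)) = (\<Sum>j<p. Tpp $$ (i,j) + (Tpm * A) $$ (i,j))"
    using Tpp Tpm A i by (intro sum.cong) auto
  ultimately show "(\<Sum>j<p. (Tpp + Tpm * A) $$ (i,j)) \<le> 0"
    using rows[rule_format, OF i] by (simp add: sum.distrib)
qed

section \<open>The Cayley transform of a sub-generator\<close>

locale cayley_transform =
  fixes q :: nat and U N :: "real mat" and a b :: real
  assumes U: "U \<in> carrier_mat q q" and N: "N \<in> carrier_mat q q"
    and inverse: "(1\<^sub>m q - a \<cdot>\<^sub>m U) * N = 1\<^sub>m q" "N * (1\<^sub>m q - a \<cdot>\<^sub>m U) = 1\<^sub>m q"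
begin

definition cayley :: "real mat" where
  "cayley = (1\<^sub>m q + b \<cdot>\<^sub>m U) * N"

lemma cayley_carrier: "cayley \<in> carrier_mat q q"
  unfolding cayley_def using U N by auto

lemma inverse_commutes: "N * U = U * N"
proof -
  let ?M = "1\<^sub>m q - a \<cdot>\<^sub>m U"
  note d = carrier_matD[OF U] carrier_matD[OF N]
  have UM: "U * ?M = ?M * U" using d by (simp add: mat_dim_algebra)
  have "N * U = N * U * (?M * N)" using inverse d by simp
  also have "\<dots> = N * (?M * U) * N" using d by (simp add: mat_dim_algebra UM)
  also have "\<dots> = (N * ?M) * U * N" using d by (simp add: assoc_mult_dim)
  also have "\<dots> = U * N" using inverse d by simp
  finally show ?thesis .
qed

lemma cayley_left: "(1\<^sub>m q - a \<cdot>\<^sub>m U) * cayley = 1\<^sub>m q + b \<cdot>\<^sub>m U"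
proof -
  let ?M = "1\<^sub>m q - a \<cdot>\<^sub>m U"
  note d = carrier_matD[OF U] carrier_matD[OF N]
  have "?M * cayley = ?M * N + b \<cdot>\<^sub>m ((?M * U) * N)"
    unfolding cayley_def using d by (simp add: mat_dim_algebra)
  also have "?M * U = U * ?M" using d by (simp add: mat_dim_algebra)
  finally show ?thesis using inverse d by (simp add: assoc_mult_dim)
qed

lemma cayley_right: "cayley * (1\<^sub>m q - a \<cdot>\<^sub>m U) = 1\<^sub>m q + b \<cdot>\<^sub>m U"
  unfolding cayley_def using carrier_matD[OF U] carrier_matD[OF N] inverse
  by (simp add: assoc_mult_dim)

lemma cayley_unique:
  assumes "B \<in> carrier_mat q q" "(1\<^sub>m q - a \<cdot>\<^sub>m U) * B = 1\<^sub>m q + b \<cdot>\<^sub>m U"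
  shows "B = cayley"
proof -
  let ?M = "1\<^sub>m q - a \<cdot>\<^sub>m U"
  note d = carrier_matD[OF U] carrier_matD[OF N] carrier_matD[OF assms(1)]
  have "B = (N * ?M) * B" using inverse d by simp
  also have "\<dots> = N * (1\<^sub>m q + b \<cdot>\<^sub>m U)" using d assms(2) by (simp add: assoc_mult_dim)
  also have "\<dots> = N + b \<cdot>\<^sub>m (N * U)" using d by (simp add: mult_add_distrib_dim mult_smult_dim)
  also have "\<dots> = cayley" unfolding cayley_def using d by (simp add: inverse_commutes mat_dim_algebra)
  finally show ?thesis .
qed

lemma cayley_shift_mult: "(b \<cdot>\<^sub>m 1\<^sub>m q + a \<cdot>\<^sub>m cayley) * (1\<^sub>m q - a \<cdot>\<^sub>m U) = (a + b) \<cdot>\<^sub>m 1\<^sub>m q"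
proof -
  note d = carrier_matD[OF U] carrier_matD[OF cayley_carrier]
  have "(b \<cdot>\<^sub>m 1\<^sub>m q + a \<cdot>\<^sub>m cayley) * (1\<^sub>m q - a \<cdot>\<^sub>m U)
      = b \<cdot>\<^sub>m (1\<^sub>m q - a \<cdot>\<^sub>m U) + a \<cdot>\<^sub>m (1\<^sub>m q + b \<cdot>\<^sub>m U)"
    using d by (simp add: add_mult_distrib_dim smult_mult_dim cayley_right)
  also have "\<dots> = (a + b) \<cdot>\<^sub>m 1\<^sub>m q" using d by (intro eq_matI) (auto simp: algebra_simps)
  finally show ?thesis .
qed

lemma one_minus_cayley_mult: "(1\<^sub>m q - cayley) * (1\<^sub>m q - a \<cdot>\<^sub>m U) = (- (a + b)) \<cdot>\<^sub>m U"
proof -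
  note d = carrier_matD[OF U] carrier_matD[OF cayley_carrier]
  have "(1\<^sub>m q - cayley) * (1\<^sub>m q - a \<cdot>\<^sub>m U) = (1\<^sub>m q - a \<cdot>\<^sub>m U) - (1\<^sub>m q + b \<cdot>\<^sub>m U)"
    using d by (simp add: minus_mult_distrib_dim cayley_right)
  also have "\<dots> = (- (a + b)) \<cdot>\<^sub>m U" using d by (intro eq_matI) (auto simp: algebra_simps)
  finally show ?thesis .
qed

lemma one_minus_cayley: "1\<^sub>m q - cayley = - (U * (b \<cdot>\<^sub>m 1\<^sub>m q + a \<cdot>\<^sub>m cayley))"
proof (rule mult_right_cancel_invertible[where M="1\<^sub>m q - a \<cdot>\<^sub>m U" and N=N])
  note d = carrier_matD[OF U] carrier_matD[OF cayley_carrier]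
  have "(- (U * (b \<cdot>\<^sub>m 1\<^sub>m q + a \<cdot>\<^sub>m cayley))) * (1\<^sub>m q - a \<cdot>\<^sub>m U)
      = - (U * ((b \<cdot>\<^sub>m 1\<^sub>m q + a \<cdot>\<^sub>m cayley) * (1\<^sub>m q - a \<cdot>\<^sub>m U)))"
    using d by (simp add: assoc_mult_dim)
  also have "\<dots> = (- (a + b)) \<cdot>\<^sub>m U"
    unfolding cayley_shift_mult using d by (intro eq_matI) (auto simp: mult_smult_dim algebra_simps)
  finally show "(1\<^sub>m q - cayley) * (1\<^sub>m q - a \<cdot>\<^sub>m U)
      = (- (U * (b \<cdot>\<^sub>m 1\<^sub>m q + a \<cdot>\<^sub>m cayley))) * (1\<^sub>m q - a \<cdot>\<^sub>m U)"
    by (simp add: one_minus_cayley_mult)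
qed (use U N inverse cayley_carrier in auto)

text \<open>Multiplying by \<open>1 - a U\<close> turns the Sylvester-type equation into a linear one.\<close>

lemma cayley_sylvester_iff:
  assumes A: "A \<in> carrier_mat r q" and V: "V \<in> carrier_mat r q" and ab: "a + b \<noteq> 0"
  shows "A * (1\<^sub>m q - cayley) = V * (b \<cdot>\<^sub>m 1\<^sub>m q + a \<cdot>\<^sub>m cayley) \<longleftrightarrow> V + A * U = 0\<^sub>m r q"
proof
  let ?M = "1\<^sub>m q - a \<cdot>\<^sub>m U" and ?K = "b \<cdot>\<^sub>m 1\<^sub>m q + a \<cdot>\<^sub>m cayley"
  note d = carrier_matD[OF U] carrier_matD[OF cayley_carrier] carrier_matD[OF A] carrier_matD[OF V]
  assume "A * (1\<^sub>m q - cayley) = V * ?K"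
  then have "A * ((1\<^sub>m q - cayley) * ?M) = V * (?K * ?M)"
    using d by (simp add: assoc_mult_dim[symmetric])
  then have e: "(- (a + b)) \<cdot>\<^sub>m (A * U) = (a + b) \<cdot>\<^sub>m V"
    using d by (simp add: one_minus_cayley_mult cayley_shift_mult mult_smult_dim)
  show "V + A * U = 0\<^sub>m r q"
  proof (rule eq_matI)
    fix i j assume ij: "i < dim_row (0\<^sub>m r q :: real mat)" "j < dim_col (0\<^sub>m r q :: real mat)"
    have "(- (a + b)) * (A * U) $$ (i,j) = (a + b) * V $$ (i,j)"
      using arg_cong[OF e, of "\<lambda>X. X $$ (i,j)"] ij d by simp
    then have "(a + b) * (V $$ (i,j) + (A * U) $$ (i,j)) = 0" by (simp add: algebra_simps)
    then show "(V + A * U) $$ (i,j) = 0\<^sub>m r q $$ (i,j)" using ab ij d by simp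
  qed (use d in auto)
next
  let ?K = "b \<cdot>\<^sub>m 1\<^sub>m q + a \<cdot>\<^sub>m cayley"
  note d = carrier_matD[OF U] carrier_matD[OF cayley_carrier] carrier_matD[OF A] carrier_matD[OF V]
  assume h: "V + A * U = 0\<^sub>m r q"
  have "V = - (A * U)"
  proof (rule eq_matI)
    fix i j assume ij: "i < dim_row (- (A * U))" "j < dim_col (- (A * U))"
    have "(V + A * U) $$ (i,j) = 0" using h ij d by simp
    then show "V $$ (i,j) = (- (A * U)) $$ (i,j)" using ij d by (simp add: add_eq_0_iff)
  qed (use d in auto)
  then have "V * ?K = - (A * (U * ?K))"
    using d by (simp add: assoc_mult_dim)
  also have "\<dots> = A * (1\<^sub>m q - cayley)"
    unfolding one_minus_cayley using d by (subst uminus_mult_right_mat) simp_all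
  finally show "A * (1\<^sub>m q - cayley) = V * ?K" by simp
qed

end

lemma blk_carrier:
  assumes "M \<in> carrier_mat (p+q) (p+q)"
  shows "blk_pp p M \<in> carrier_mat p p" "blk_pm p M \<in> carrier_mat p q"
    "blk_mp p M \<in> carrier_mat q p" "blk_mm p M \<in> carrier_mat q q"
  using assms by (auto simp: blk_pp_def blk_pm_def blk_mp_def blk_mm_def)

lemma four_block_mat_blk:
  assumes "M \<in> carrier_mat (p+q) (p+q)"
  shows "four_block_mat (blk_pp p M) (blk_pm p M) (blk_mp p M) (blk_mm p M) = M"
  using assms by (intro eq_matI) (auto simp: blk_pp_def blk_pm_def blk_mp_def blk_mm_def)

lemma blk_four_block_mat:
  assumes "A \<in> carrier_mat p p" "B \<in> carrier_mat p q" "C \<in> carrier_mat q p" "D \<in> carrier_mat q q"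
  shows "blk_pp p (four_block_mat A B C D) = A" "blk_pm p (four_block_mat A B C D) = B"
    "blk_mp p (four_block_mat A B C D) = C" "blk_mm p (four_block_mat A B C D) = D"
  using assms by (auto intro!: eq_matI simp: blk_pp_def blk_pm_def blk_mp_def blk_mm_def)

lemma blk_one_plus_smult:
  fixes T :: "real mat"
  assumes "T \<in> carrier_mat (p+q) (p+q)"
  shows "blk_pp p (1\<^sub>m (p+q) + c \<cdot>\<^sub>m T) = 1\<^sub>m p + c \<cdot>\<^sub>m blk_pp p T"
    "blk_pm p (1\<^sub>m (p+q) + c \<cdot>\<^sub>m T) = c \<cdot>\<^sub>m blk_pm p T"
    "blk_mp p (1\<^sub>m (p+q) + c \<cdot>\<^sub>m T) = c \<cdot>\<^sub>m blk_mp p T"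
    "blk_mm p (1\<^sub>m (p+q) + c \<cdot>\<^sub>m T) = 1\<^sub>m q + c \<cdot>\<^sub>m blk_mm p T"
  using assms by (auto intro!: eq_matI simp: blk_pp_def blk_pm_def blk_mp_def blk_mm_def)

lemma nonneg_mat_blk:
  assumes "nonneg_mat M" "M \<in> carrier_mat (p+q) (p+q)"
  shows "nonneg_mat (blk_pp p M)" "nonneg_mat (blk_pm p M)" "nonneg_mat (blk_mp p M)" "nonneg_mat (blk_mm p M)"
  using assms unfolding nonneg_mat_def by (auto simp: blk_pp_def blk_pm_def blk_mp_def blk_mm_def)

lemma four_block_mat_zero_col:
  assumes "M \<in> carrier_mat (p+q) (p+q)" "\<forall>i<p+q. \<forall>j<p. M $$ (i,j) = 0"
  shows "four_block_mat (0\<^sub>m p p) (blk_pm p M) (0\<^sub>m q p) (blk_mm p M) = M"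
  using assms by (intro eq_matI) (auto simp: blk_pm_def blk_mm_def)

lemma le_mat_four_block_zero_col_iff:
  assumes "A \<in> carrier_mat p q" "A' \<in> carrier_mat p q" "B \<in> carrier_mat q q" "B' \<in> carrier_mat q q"
  shows "le_mat (four_block_mat (0\<^sub>m p p) A (0\<^sub>m q p) B) (four_block_mat (0\<^sub>m p p) A' (0\<^sub>m q p) B')
    \<longleftrightarrow> le_mat A A' \<and> le_mat B B'"
proof
  assume le: "le_mat (four_block_mat (0\<^sub>m p p) A (0\<^sub>m q p) B) (four_block_mat (0\<^sub>m p p) A' (0\<^sub>m q p) B')"
  have "A $$ (i,j) \<le> A' $$ (i,j)" if "i < p" "j < q" for i j
    using le[unfolded le_mat_def, rule_format, of i "j + p"] that assms by simp
  moreover have "B $$ (i,j) \<le> B' $$ (i,j)" if "i < q" "j < q" for i j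
    using le[unfolded le_mat_def, rule_format, of "i + p" "j + p"] that assms by simp
  ultimately show "le_mat A A' \<and> le_mat B B'" using assms unfolding le_mat_def by auto
qed (use assms in \<open>auto simp: le_mat_def\<close>)

lemma four_block_mat_zero_col_eq_iff:
  assumes "A \<in> carrier_mat p q" "B \<in> carrier_mat q q" "A' \<in> carrier_mat p q" "B' \<in> carrier_mat q q"
  shows "four_block_mat (0\<^sub>m p p) A' (0\<^sub>m q p) B' = four_block_mat (0\<^sub>m p p) A (0\<^sub>m q p) B \<longleftrightarrow> A' = A \<and> B' = B"
  using blk_four_block_mat[OF zero_carrier_mat assms(1) zero_carrier_mat assms(2)]
    blk_four_block_mat[OF zero_carrier_mat assms(3) zero_carrier_mat assms(4)] by metis

text \<open>The block shape shared by both QBDs of the theorem: level-down blocks only enter \<open>\<S>\<^sub>-\<close>,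
  level-up blocks only enter \<open>\<S>\<^sub>+\<close>.\<close>

lemma fixpoint_rhs_four_block:
  fixes A B Dpm Dmm Upp Ump :: "real mat"
  assumes A: "A \<in> carrier_mat p q" and B: "B \<in> carrier_mat q q"
    and D: "Dpm \<in> carrier_mat p q" "Dmm \<in> carrier_mat q q"
    and L0: "L0 \<in> carrier_mat (p+q) (p+q)"
    and Up: "Upp \<in> carrier_mat p p" "Ump \<in> carrier_mat q p"
  defines "X \<equiv> four_block_mat (0\<^sub>m p p) A (0\<^sub>m q p) B"
  shows "four_block_mat (0\<^sub>m p p) Dpm (0\<^sub>m q p) Dmm + L0 * X + four_block_mat Upp (0\<^sub>m p q) Ump (0\<^sub>m q q) * (X * X)
    = four_block_mat (0\<^sub>m p p) (Dpm + blk_pp p L0 * A + blk_pm p L0 * B + Upp * (A * B))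
        (0\<^sub>m q p) (Dmm + blk_mp p L0 * A + blk_mm p L0 * B + Ump * (A * B))"
proof -
  note L0b = blk_carrier[OF L0]
  note z = zero_carrier_mat
  have AB: "A * B \<in> carrier_mat p q" using A B by auto
  have XX: "X * X = four_block_mat (0\<^sub>m p p) (A * B) (0\<^sub>m q p) (B * B)"
    unfolding X_def mult_four_block_mat[OF z A z B z A z B] using A B by simp
  have L0X: "L0 * X = four_block_mat (0\<^sub>m p p) (blk_pp p L0 * A + blk_pm p L0 * B)
      (0\<^sub>m q p) (blk_mp p L0 * A + blk_mm p L0 * B)"
  proof -
    have "L0 * X = four_block_mat (blk_pp p L0) (blk_pm p L0) (blk_mp p L0) (blk_mm p L0) * X"
      by (simp only: four_block_mat_blk[OF L0])
    then show ?thesis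
      unfolding X_def mult_four_block_mat[OF L0b z A z B] using A B L0b by simp
  qed
  have UXX: "four_block_mat Upp (0\<^sub>m p q) Ump (0\<^sub>m q q) * (X * X)
      = four_block_mat (0\<^sub>m p p) (Upp * (A * B)) (0\<^sub>m q p) (Ump * (A * B))"
    unfolding XX mult_four_block_mat[OF Up(1) z Up(2) z z AB z mult_carrier_mat[OF B B]] using A B Up by simp
  have c0: "blk_pp p L0 * A + blk_pm p L0 * B \<in> carrier_mat p q"
    "blk_mp p L0 * A + blk_mm p L0 * B \<in> carrier_mat q q"
    "Upp * (A * B) \<in> carrier_mat p q" "Ump * (A * B) \<in> carrier_mat q q"
    using A B L0b Up by auto
  show ?thesis
    unfolding L0X UXX add_four_block_mat[OF z D(1) z D(2) z c0(1) z c0(2)]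
    using add_four_block_mat[OF _ _ _ _ z c0(3) z c0(4), of "0\<^sub>m p p + 0\<^sub>m p p"] A B D Up L0b c0
    by (simp add: assoc_add_mat[of _ p q] assoc_add_mat[of _ q q])
qed

lemma generator_blocks:
  assumes gen: "is_generator (p+q) T"
  shows "nonneg_mat (blk_pm p T)" "nonneg_mat (blk_mp p T)"
    and "\<forall>i<p. \<forall>j<p. i \<noteq> j \<longrightarrow> blk_pp p T $$ (i,j) \<ge> 0"
    and "\<forall>i<q. \<forall>j<q. i \<noteq> j \<longrightarrow> blk_mm p T $$ (i,j) \<ge> 0"
    and "\<forall>i<p. (\<Sum>j<p. blk_pp p T $$ (i,j)) + (\<Sum>j<q. blk_pm p T $$ (i,j)) = 0"
    and "\<forall>i<q. (\<Sum>j<p. blk_mp p T $$ (i,j)) + (\<Sum>j<q. blk_mm p T $$ (i,j)) = 0"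
proof -
  have T: "T \<in> carrier_mat (p+q) (p+q)" and off: "\<forall>i<p+q. \<forall>j<p+q. i \<noteq> j \<longrightarrow> T $$ (i,j) \<ge> 0"
    and rows: "\<forall>i<p+q. (\<Sum>j<p+q. T $$ (i,j)) = 0"
    using gen unfolding is_generator_def by auto
  show "nonneg_mat (blk_pm p T)" "nonneg_mat (blk_mp p T)"
    using T off unfolding nonneg_mat_def blk_pm_def blk_mp_def by auto
  show "\<forall>i<p. \<forall>j<p. i \<noteq> j \<longrightarrow> blk_pp p T $$ (i,j) \<ge> 0"
       "\<forall>i<q. \<forall>j<q. i \<noteq> j \<longrightarrow> blk_mm p T $$ (i,j) \<ge> 0"
    using T off unfolding blk_pp_def blk_mm_def by auto
  show "\<forall>i<p. (\<Sum>j<p. blk_pp p T $$ (i,j)) + (\<Sum>j<q. blk_pm p T $$ (i,j)) = 0"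
  proof (intro allI impI)
    fix i assume "i < p"
    then show "(\<Sum>j<p. blk_pp p T $$ (i,j)) + (\<Sum>j<q. blk_pm p T $$ (i,j)) = 0"
      using T rows sum_lessThan_add_split[where f="\<lambda>j. T $$ (i, j)" and p=p and q=q]
      unfolding blk_pp_def blk_pm_def by simp
  qed
  show "\<forall>i<q. (\<Sum>j<p. blk_mp p T $$ (i,j)) + (\<Sum>j<q. blk_mm p T $$ (i,j)) = 0"
  proof (intro allI impI)
    fix i assume "i < q"
    then show "(\<Sum>j<p. blk_mp p T $$ (i,j)) + (\<Sum>j<q. blk_mm p T $$ (i,j)) = 0"
      using T rows sum_lessThan_add_split[where f="\<lambda>j. T $$ (i + p, j)" and p=p and q=q]
      unfolding blk_mp_def blk_mm_def by simp
  qed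
qed

lemma uniformized_generator:
  assumes gen: "is_generator n T" and lam: "lam > 0" "\<forall>i<n. \<bar>T $$ (i,i)\<bar> \<le> lam"
  shows "nonneg_mat (1\<^sub>m n + (1 / lam) \<cdot>\<^sub>m T)"
    and "\<forall>i<n. (\<Sum>j<n. (1\<^sub>m n + (1 / lam) \<cdot>\<^sub>m T) $$ (i,j)) = 1"
proof -
  have T: "T \<in> carrier_mat n n" and off: "\<forall>i<n. \<forall>j<n. i \<noteq> j \<longrightarrow> T $$ (i,j) \<ge> 0"
    and rows: "\<forall>i<n. (\<Sum>j<n. T $$ (i,j)) = 0"
    using gen unfolding is_generator_def by auto
  have "1 + T $$ (i,i) / lam \<ge> 0" if "i < n" for i
    using lam that by (auto simp: field_simps abs_le_iff)
  then show "nonneg_mat (1\<^sub>m n + (1 / lam) \<cdot>\<^sub>m T)"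
    unfolding nonneg_mat_def using T off lam by auto
  show "\<forall>i<n. (\<Sum>j<n. (1\<^sub>m n + (1 / lam) \<cdot>\<^sub>m T) $$ (i,j)) = 1"
    using T rows by (simp add: sum.distrib sum_divide_distrib[symmetric])
qed

section \<open>The two QBDs of the theorem\<close>

locale fluid_qbd =
  fixes p q :: nat and T Psi :: "real mat" and lam mu :: real
  assumes generator: "is_generator (p + q) T"
    and Psi: "min_nonneg_riccati_sol p T Psi"
    and lam: "lam > 0" "\<forall>i<p+q. \<bar>T $$ (i,i)\<bar> \<le> lam"
    and mu: "mu > 0" "\<forall>i<p+q. \<bar>T $$ (i,i)\<bar> \<le> mu"
begin

abbreviation Tpp :: "real mat" where
  "Tpp \<equiv> blk_pp p T"
abbreviation Tpm :: "real mat" where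
  "Tpm \<equiv> blk_pm p T"
abbreviation Tmp :: "real mat" where
  "Tmp \<equiv> blk_mp p T"
abbreviation Tmm :: "real mat" where
  "Tmm \<equiv> blk_mm p T"
abbreviation \<alpha> :: "real" where
  "\<alpha> \<equiv> 1 / lam"
abbreviation \<beta> :: "real" where
  "\<beta> \<equiv> 1 / mu"

definition Pl :: "real mat" where
  "Pl = 1\<^sub>m (p+q) + \<alpha> \<cdot>\<^sub>m T"
definition Pm :: "real mat" where
  "Pm = 1\<^sub>m (p+q) + \<beta> \<cdot>\<^sub>m T"
definition W :: "real mat" where
  "W = (1\<^sub>m q + \<beta> \<cdot>\<^sub>m (Tmm + Tmp * Psi)) * minv (1\<^sub>m q - \<alpha> \<cdot>\<^sub>m (Tmm + Tmp * Psi))"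
definition R :: "real mat" where
  "R = minv (1\<^sub>m p - \<beta> \<cdot>\<^sub>m Tpp)"
definition C'm :: "real mat" where
  "C'm = (1/2) \<cdot>\<^sub>m four_block_mat (0\<^sub>m p p) (blk_pm p Pm) (0\<^sub>m q p) (blk_mm p Pm)"
definition C'0 :: "real mat" where
  "C'0 = (1/2) \<cdot>\<^sub>m four_block_mat (blk_pp p Pm) (blk_pm p Pl) (blk_mp p Pm) (blk_mm p Pl)"
definition C'1 :: "real mat" where
  "C'1 = (1/2) \<cdot>\<^sub>m four_block_mat (blk_pp p Pl) (0\<^sub>m p q) (blk_mp p Pl) (0\<^sub>m q q)"
definition Cm :: "real mat" where
  "Cm = four_block_mat (0\<^sub>m p p) (R * blk_pm p Pm) (0\<^sub>m q p) W"
definition C0 :: "real mat" where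
  "C0 = four_block_mat (0\<^sub>m p p) (R * blk_pm p Pl) (0\<^sub>m q p) (0\<^sub>m q q)"
definition C1 :: "real mat" where
  "C1 = four_block_mat (R * blk_pp p Pl) (0\<^sub>m p q) (0\<^sub>m q p) (0\<^sub>m q q)"
definition E :: "real mat" where
  "E = four_block_mat (0\<^sub>m p p) Psi (0\<^sub>m q p) W"

lemma T_carrier: "T \<in> carrier_mat (p+q) (p+q)"
  using generator unfolding is_generator_def by auto

lemmas T_blocks_carrier = blk_carrier[OF T_carrier]
lemmas T_blocks = generator_blocks[OF generator]

lemma Pl_blocks: "blk_pp p Pl = 1\<^sub>m p + \<alpha> \<cdot>\<^sub>m Tpp" "blk_pm p Pl = \<alpha> \<cdot>\<^sub>m Tpm"
    "blk_mp p Pl = \<alpha> \<cdot>\<^sub>m Tmp" "blk_mm p Pl = 1\<^sub>m q + \<alpha> \<cdot>\<^sub>m Tmm"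
  unfolding Pl_def by (rule blk_one_plus_smult[OF T_carrier])+

lemma Pm_blocks: "blk_pp p Pm = 1\<^sub>m p + \<beta> \<cdot>\<^sub>m Tpp" "blk_pm p Pm = \<beta> \<cdot>\<^sub>m Tpm"
    "blk_mp p Pm = \<beta> \<cdot>\<^sub>m Tmp" "blk_mm p Pm = 1\<^sub>m q + \<beta> \<cdot>\<^sub>m Tmm"
  unfolding Pm_def by (rule blk_one_plus_smult[OF T_carrier])+

lemma Pl_carrier: "Pl \<in> carrier_mat (p+q) (p+q)" and Pm_carrier: "Pm \<in> carrier_mat (p+q) (p+q)"
  unfolding Pl_def Pm_def using T_carrier by auto

lemmas Pl_stochastic = uniformized_generator[OF generator lam, folded Pl_def]
lemmas Pm_stochastic = uniformized_generator[OF generator mu, folded Pm_def]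

lemma Psi_carrier: "Psi \<in> carrier_mat p q"
  and Psi_nonneg: "nonneg_mat Psi"
  and Psi_riccati: "Tpm + Psi * Tmm + Tpp * Psi + Psi * Tmp * Psi = 0\<^sub>m p q"
  using Psi T_carrier unfolding min_nonneg_riccati_sol_def riccati_sol_def by auto

lemma Psi_minimal: "A \<in> carrier_mat p q \<Longrightarrow> nonneg_mat A \<Longrightarrow> Tpm + A * Tmm + Tpp * A + A * Tmp * A = 0\<^sub>m p q
    \<Longrightarrow> le_mat Psi A"
  using Psi T_carrier unfolding min_nonneg_riccati_sol_def riccati_sol_def by auto

lemma W_carrier: "W \<in> carrier_mat q q" and R_carrier: "R \<in> carrier_mat p p"
proof -
  have "1\<^sub>m q - \<alpha> \<cdot>\<^sub>m (Tmm + Tmp * Psi) \<in> carrier_mat q q" "1\<^sub>m p - \<beta> \<cdot>\<^sub>m Tpp \<in> carrier_mat p p"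
    using T_blocks_carrier Psi_carrier by auto
  from this[THEN minv_carrier] show "W \<in> carrier_mat q q" "R \<in> carrier_mat p p"
    unfolding W_def R_def using T_blocks_carrier Psi_carrier by (auto intro: mult_carrier_mat)
qed

lemma Tpp_subgenerator: "subgenerator p Tpp"
  unfolding subgenerator_def
proof (intro conjI allI impI)
  fix i assume i: "i < p"
  have "(\<Sum>j<q. Tpm $$ (i,j)) \<ge> 0"
    using T_blocks(1) T_blocks_carrier i unfolding nonneg_mat_def by (intro sum_nonneg) auto
  then show "(\<Sum>j<p. Tpp $$ (i,j)) \<le> 0" using T_blocks(5) i by force
qed (use T_blocks T_blocks_carrier in auto)

lemma U_subgenerator:
  assumes "A \<in> carrier_mat p q" "nonneg_mat A" "\<forall>r<p. (\<Sum>j<q. A $$ (r,j)) \<le> 1"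
  shows "subgenerator q (Tmm + Tmp * A)"
  using T_blocks T_blocks_carrier assms
  by (intro subgenerator_plus_mult[where q=p]) (auto simp: add.commute)

lemma cayley_of_substochastic:
  assumes "A \<in> carrier_mat p q" "nonneg_mat A" "\<forall>r<p. (\<Sum>j<q. A $$ (r,j)) \<le> 1"
  shows "cayley_transform q (Tmm + Tmp * A) (minv (1\<^sub>m q - \<alpha> \<cdot>\<^sub>m (Tmm + Tmp * A))) \<alpha>"
proof
  have "diag_dominant_Z_mat q (1\<^sub>m q - \<alpha> \<cdot>\<^sub>m (Tmm + Tmp * A))"
    using lam by (intro diag_dominant_Z_mat_one_minus_subgenerator U_subgenerator assms) auto
  note inv = diag_dominant_Z_mat_inverse[OF this]
  show "Tmm + Tmp * A \<in> carrier_mat q q" using T_blocks_carrier assms(1) by auto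
  show "minv (1\<^sub>m q - \<alpha> \<cdot>\<^sub>m (Tmm + Tmp * A)) \<in> carrier_mat q q"
    "(1\<^sub>m q - \<alpha> \<cdot>\<^sub>m (Tmm + Tmp * A)) * minv (1\<^sub>m q - \<alpha> \<cdot>\<^sub>m (Tmm + Tmp * A)) = 1\<^sub>m q"
    "minv (1\<^sub>m q - \<alpha> \<cdot>\<^sub>m (Tmm + Tmp * A)) * (1\<^sub>m q - \<alpha> \<cdot>\<^sub>m (Tmm + Tmp * A)) = 1\<^sub>m q"
    using inv by auto
qed

lemma riccati_eq_sylvester:
  assumes "A \<in> carrier_mat p q"
  shows "Tpm + A * Tmm + Tpp * A + A * Tmp * A = (Tpm + Tpp * A) + A * (Tmm + Tmp * A)"
proof -
  note d = carrier_matD[OF assms] T_blocks_carrier[THEN carrier_matD(1)] T_blocks_carrier[THEN carrier_matD(2)]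
  have "A * (Tmm + Tmp * A) = A * Tmm + A * Tmp * A" using d by (simp add: mult_add_distrib_dim assoc_mult_dim)
  then show ?thesis using d by (intro eq_matI) (auto simp: algebra_simps)
qed

definition C'_rhs_pm :: "real mat \<Rightarrow> real mat \<Rightarrow> real mat" where
  "C'_rhs_pm A B = (1/2) \<cdot>\<^sub>m (\<beta> \<cdot>\<^sub>m Tpm) + ((1/2) \<cdot>\<^sub>m (1\<^sub>m p + \<beta> \<cdot>\<^sub>m Tpp)) * A
    + ((1/2) \<cdot>\<^sub>m (\<alpha> \<cdot>\<^sub>m Tpm)) * B + ((1/2) \<cdot>\<^sub>m (1\<^sub>m p + \<alpha> \<cdot>\<^sub>m Tpp)) * (A * B)"

definition C'_rhs_mm :: "real mat \<Rightarrow> real mat \<Rightarrow> real mat" where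
  "C'_rhs_mm A B = (1/2) \<cdot>\<^sub>m (1\<^sub>m q + \<beta> \<cdot>\<^sub>m Tmm) + ((1/2) \<cdot>\<^sub>m (\<beta> \<cdot>\<^sub>m Tmp)) * A
    + ((1/2) \<cdot>\<^sub>m (1\<^sub>m q + \<alpha> \<cdot>\<^sub>m Tmm)) * B + ((1/2) \<cdot>\<^sub>m (\<alpha> \<cdot>\<^sub>m Tmp)) * (A * B)"

definition C_rhs_pm :: "real mat \<Rightarrow> real mat \<Rightarrow> real mat" where
  "C_rhs_pm A B = R * (\<beta> \<cdot>\<^sub>m Tpm) + (R * (\<alpha> \<cdot>\<^sub>m Tpm)) * B + (R * (1\<^sub>m p + \<alpha> \<cdot>\<^sub>m Tpp)) * (A * B)"

lemma C'_rhs_four_block: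
  assumes A: "A \<in> carrier_mat p q" and B: "B \<in> carrier_mat q q"
  defines "X \<equiv> four_block_mat (0\<^sub>m p p) A (0\<^sub>m q p) B"
  shows "C'm + C'0 * X + C'1 * (X * X) = four_block_mat (0\<^sub>m p p) (C'_rhs_pm A B) (0\<^sub>m q p) (C'_rhs_mm A B)"
proof -
  note c = T_blocks_carrier
  have C'm: "C'm = four_block_mat (0\<^sub>m p p) ((1/2) \<cdot>\<^sub>m (\<beta> \<cdot>\<^sub>m Tpm)) (0\<^sub>m q p) ((1/2) \<cdot>\<^sub>m (1\<^sub>m q + \<beta> \<cdot>\<^sub>m Tmm))"
    unfolding C'm_def Pm_blocks using c by (subst smult_four_block_mat) auto
  have C'1: "C'1 = four_block_mat ((1/2) \<cdot>\<^sub>m (1\<^sub>m p + \<alpha> \<cdot>\<^sub>m Tpp)) (0\<^sub>m p q) ((1/2) \<cdot>\<^sub>m (\<alpha> \<cdot>\<^sub>m Tmp)) (0\<^sub>m q q)"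
    unfolding C'1_def Pl_blocks using c by (subst smult_four_block_mat) auto
  have C'0: "C'0 = four_block_mat ((1/2) \<cdot>\<^sub>m (1\<^sub>m p + \<beta> \<cdot>\<^sub>m Tpp)) ((1/2) \<cdot>\<^sub>m (\<alpha> \<cdot>\<^sub>m Tpm))
      ((1/2) \<cdot>\<^sub>m (\<beta> \<cdot>\<^sub>m Tmp)) ((1/2) \<cdot>\<^sub>m (1\<^sub>m q + \<alpha> \<cdot>\<^sub>m Tmm))"
    unfolding C'0_def Pl_blocks Pm_blocks using c by (subst smult_four_block_mat) auto
  have cb: "(1/2) \<cdot>\<^sub>m (1\<^sub>m p + \<beta> \<cdot>\<^sub>m Tpp) \<in> carrier_mat p p" "(1/2) \<cdot>\<^sub>m (\<alpha> \<cdot>\<^sub>m Tpm) \<in> carrier_mat p q"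
    "(1/2) \<cdot>\<^sub>m (\<beta> \<cdot>\<^sub>m Tmp) \<in> carrier_mat q p" "(1/2) \<cdot>\<^sub>m (1\<^sub>m q + \<alpha> \<cdot>\<^sub>m Tmm) \<in> carrier_mat q q"
    "(1/2) \<cdot>\<^sub>m (\<beta> \<cdot>\<^sub>m Tpm) \<in> carrier_mat p q" "(1/2) \<cdot>\<^sub>m (1\<^sub>m q + \<beta> \<cdot>\<^sub>m Tmm) \<in> carrier_mat q q"
    "(1/2) \<cdot>\<^sub>m (1\<^sub>m p + \<alpha> \<cdot>\<^sub>m Tpp) \<in> carrier_mat p p" "(1/2) \<cdot>\<^sub>m (\<alpha> \<cdot>\<^sub>m Tmp) \<in> carrier_mat q p"
    using c by auto
  have C'0_carrier: "C'0 \<in> carrier_mat (p+q) (p+q)" unfolding C'0 using cb by auto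
  show ?thesis
    unfolding C'm C'1 X_def C'_rhs_pm_def C'_rhs_mm_def
    using fixpoint_rhs_four_block[OF A B cb(5,6) C'0_carrier cb(7,8)]
    unfolding C'0 blk_four_block_mat[OF cb(1-4)] .
qed

lemma C'_rhs_pm_eq_iff:
  assumes "A \<in> carrier_mat p q" "B \<in> carrier_mat q q"
  shows "C'_rhs_pm A B = A \<longleftrightarrow> A * (1\<^sub>m q - B) = (Tpm + Tpp * A) * (\<beta> \<cdot>\<^sub>m 1\<^sub>m q + \<alpha> \<cdot>\<^sub>m B)"
    and "C'_rhs_pm A B = A \<longleftrightarrow>
      (1\<^sub>m p - \<beta> \<cdot>\<^sub>m Tpp) * A = \<beta> \<cdot>\<^sub>m Tpm + (\<alpha> \<cdot>\<^sub>m Tpm) * B + (1\<^sub>m p + \<alpha> \<cdot>\<^sub>m Tpp) * (A * B)"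
  using carrier_matD[OF assms(1)] carrier_matD[OF assms(2)] T_blocks_carrier[THEN carrier_matD(1)]
    T_blocks_carrier[THEN carrier_matD(2)] unfolding C'_rhs_pm_def
  by (simp_all add: mat_dim_algebra mat_eq_iff_entries, (intro all_entries_cong iffI; linarith)+)

lemma C'_rhs_mm_eq_iff:
  assumes "A \<in> carrier_mat p q" "B \<in> carrier_mat q q"
  shows "C'_rhs_mm A B = B \<longleftrightarrow> (1\<^sub>m q - \<alpha> \<cdot>\<^sub>m (Tmm + Tmp * A)) * B = 1\<^sub>m q + \<beta> \<cdot>\<^sub>m (Tmm + Tmp * A)"
  using carrier_matD[OF assms(1)] carrier_matD[OF assms(2)] T_blocks_carrier[THEN carrier_matD(1)]
    T_blocks_carrier[THEN carrier_matD(2)] unfolding C'_rhs_mm_def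
  apply (simp add: mat_dim_algebra mat_eq_iff_entries del: index_one_mat(1))
  apply (intro all_entries_cong)
  subgoal for i j by (cases "i = j"; simp; intro iffI; linarith)
  done

lemma C'_rhs_mm_mono:
  assumes "A \<in> carrier_mat p q" "A' \<in> carrier_mat p q" "le_mat A A'" "B \<in> carrier_mat q q" "nonneg_mat B"
  shows "le_mat (C'_rhs_mm A B) (C'_rhs_mm A' B)"
proof -
  note c = T_blocks_carrier
  have X: "(1/2) \<cdot>\<^sub>m (\<beta> \<cdot>\<^sub>m Tmp) \<in> carrier_mat q p" "nonneg_mat ((1/2) \<cdot>\<^sub>m (\<beta> \<cdot>\<^sub>m Tmp))"
    "(1/2) \<cdot>\<^sub>m (\<alpha> \<cdot>\<^sub>m Tmp) \<in> carrier_mat q p" "nonneg_mat ((1/2) \<cdot>\<^sub>m (\<alpha> \<cdot>\<^sub>m Tmp))"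
    using c T_blocks(2) lam mu by (auto intro!: nonneg_mat_smult)
  have AB: "le_mat (A * B) (A' * B)" using le_mat_mult_right assms by blast
  have "le_mat ((1/2) \<cdot>\<^sub>m (\<beta> \<cdot>\<^sub>m Tmp) * A) ((1/2) \<cdot>\<^sub>m (\<beta> \<cdot>\<^sub>m Tmp) * A')"
    "le_mat ((1/2) \<cdot>\<^sub>m (\<alpha> \<cdot>\<^sub>m Tmp) * (A * B)) ((1/2) \<cdot>\<^sub>m (\<alpha> \<cdot>\<^sub>m Tmp) * (A' * B))"
    using assms X AB by (auto intro!: le_mat_mult_left)
  then show ?thesis
    using assms c unfolding C'_rhs_mm_def le_mat_def by (auto intro!: add_mono)
qed

lemma R_inverse: "R * (1\<^sub>m p - \<beta> \<cdot>\<^sub>m Tpp) = 1\<^sub>m p" "(1\<^sub>m p - \<beta> \<cdot>\<^sub>m Tpp) * R = 1\<^sub>m p"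
  and R_nonneg: "nonneg_mat R"
proof -
  have "diag_dominant_Z_mat p (1\<^sub>m p - \<beta> \<cdot>\<^sub>m Tpp)"
    using mu by (intro diag_dominant_Z_mat_one_minus_subgenerator Tpp_subgenerator) auto
  from diag_dominant_Z_mat_inverse[OF this, folded R_def]
  show "R * (1\<^sub>m p - \<beta> \<cdot>\<^sub>m Tpp) = 1\<^sub>m p" "(1\<^sub>m p - \<beta> \<cdot>\<^sub>m Tpp) * R = 1\<^sub>m p" "nonneg_mat R" by auto
qed

lemma C_rhs_four_block:
  assumes A: "A \<in> carrier_mat p q" and B: "B \<in> carrier_mat q q"
  defines "X \<equiv> four_block_mat (0\<^sub>m p p) A (0\<^sub>m q p) B"
  shows "Cm + C0 * X + C1 * (X * X) = four_block_mat (0\<^sub>m p p) (C_rhs_pm A B) (0\<^sub>m q p) W"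
proof -
  note c = T_blocks_carrier
  have cb: "R * (\<alpha> \<cdot>\<^sub>m Tpm) \<in> carrier_mat p q" "R * (\<beta> \<cdot>\<^sub>m Tpm) \<in> carrier_mat p q"
    "R * (1\<^sub>m p + \<alpha> \<cdot>\<^sub>m Tpp) \<in> carrier_mat p p"
    using c R_carrier by auto
  have C0_carrier: "C0 \<in> carrier_mat (p+q) (p+q)" unfolding C0_def Pl_blocks using cb by auto
  show ?thesis
    using fixpoint_rhs_four_block[OF A B cb(2) W_carrier C0_carrier cb(3) zero_carrier_mat] A B cb W_carrier
    unfolding X_def Cm_def C0_def C1_def Pl_blocks Pm_blocks C_rhs_pm_def
    by (simp add: blk_four_block_mat[OF zero_carrier_mat cb(1) zero_carrier_mat zero_carrier_mat])
qed

lemma C_rhs_pm_eq_iff: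
  assumes A: "A \<in> carrier_mat p q" and B: "B \<in> carrier_mat q q"
  shows "C_rhs_pm A B = A \<longleftrightarrow> C'_rhs_pm A B = A"
proof -
  let ?F = "\<beta> \<cdot>\<^sub>m Tpm + (\<alpha> \<cdot>\<^sub>m Tpm) * B + (1\<^sub>m p + \<alpha> \<cdot>\<^sub>m Tpp) * (A * B)"
  note d = carrier_matD[OF A] carrier_matD[OF B] carrier_matD[OF R_carrier]
    T_blocks_carrier[THEN carrier_matD(1)] T_blocks_carrier[THEN carrier_matD(2)]
  have F: "?F \<in> carrier_mat p q" using T_blocks_carrier A B by auto
  have "C_rhs_pm A B = R * ?F" unfolding C_rhs_pm_def using d by (simp add: mat_dim_algebra)
  also have "R * ?F = A \<longleftrightarrow> (1\<^sub>m p - \<beta> \<cdot>\<^sub>m Tpp) * A = ?F"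
  proof
    assume "R * ?F = A"
    then have "(1\<^sub>m p - \<beta> \<cdot>\<^sub>m Tpp) * A = ((1\<^sub>m p - \<beta> \<cdot>\<^sub>m Tpp) * R) * ?F"
      using d F by (auto simp: assoc_mult_dim)
    then show "(1\<^sub>m p - \<beta> \<cdot>\<^sub>m Tpp) * A = ?F" using R_inverse F by (simp add: left_mult_one_mat)
  next
    assume "(1\<^sub>m p - \<beta> \<cdot>\<^sub>m Tpp) * A = ?F"
    then have "R * ?F = (R * (1\<^sub>m p - \<beta> \<cdot>\<^sub>m Tpp)) * A"
      using d by (auto simp: assoc_mult_dim)
    then show "R * ?F = A" using R_inverse A by simp
  qed
  finally show ?thesis using C'_rhs_pm_eq_iff(2)[OF A B] by simp
qed

lemma C'_entries:
  assumes "i < p+q" "j < p+q"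
  shows "C'm $$ (i,j) = (if j < p then 0 else Pm $$ (i,j) / 2)"
    "C'0 $$ (i,j) = (if j < p then Pm $$ (i,j) else Pl $$ (i,j)) / 2"
    "C'1 $$ (i,j) = (if j < p then Pl $$ (i,j) / 2 else 0)"
  using assms Pl_carrier Pm_carrier
  by (auto simp: C'm_def C'0_def C'1_def blk_pp_def blk_pm_def blk_mp_def blk_mm_def)

lemma C'_nonneg_qbd: "nonneg_qbd (p+q) C'm C'0 C'1"
proof
  show "C'm \<in> carrier_mat (p+q) (p+q)" "C'0 \<in> carrier_mat (p+q) (p+q)" "C'1 \<in> carrier_mat (p+q) (p+q)"
    unfolding C'm_def C'0_def C'1_def using blk_carrier[OF Pl_carrier] blk_carrier[OF Pm_carrier] by auto
  then show "nonneg_mat C'm" "nonneg_mat C'0" "nonneg_mat C'1"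
    using Pl_stochastic(1) Pm_stochastic(1) Pl_carrier Pm_carrier
    unfolding nonneg_mat_def by (auto simp: C'_entries)
qed

lemma C'_substochastic: "\<forall>i<p+q. (\<Sum>j<p+q. C'm $$ (i,j) + C'0 $$ (i,j) + C'1 $$ (i,j)) \<le> 1"
proof (intro allI impI)
  fix i assume i: "i < p+q"
  have "(\<Sum>j<p+q. C'm $$ (i,j) + C'0 $$ (i,j) + C'1 $$ (i,j))
      = (\<Sum>j<p+q. Pm $$ (i,j) / 2 + Pl $$ (i,j) / 2)"
    using i by (intro sum.cong) (auto simp: C'_entries)
  also have "\<dots> = 1"
    using Pl_stochastic(2) Pm_stochastic(2) i by (simp add: sum.distrib sum_divide_distrib[symmetric])
  finally show "(\<Sum>j<p+q. C'm $$ (i,j) + C'0 $$ (i,j) + C'1 $$ (i,j)) \<le> 1" by simp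
qed

lemma C'_rhs_carrier:
  assumes "A \<in> carrier_mat p q" "B \<in> carrier_mat q q"
  shows "C'_rhs_pm A B \<in> carrier_mat p q" "C'_rhs_mm A B \<in> carrier_mat q q"
  using assms T_blocks_carrier unfolding C'_rhs_pm_def C'_rhs_mm_def by auto

lemma qbd_G_C'_blocks:
  defines "G' \<equiv> qbd_G (p+q) C'm C'0 C'1"
  shows "G' = four_block_mat (0\<^sub>m p p) (blk_pm p G') (0\<^sub>m q p) (blk_mm p G')"
    and "nonneg_mat (blk_pm p G')" "\<forall>r<p. (\<Sum>j<q. blk_pm p G' $$ (r,j)) \<le> 1"
    and "C'_rhs_pm (blk_pm p G') (blk_mm p G') = blk_pm p G'"
    and "C'_rhs_mm (blk_pm p G') (blk_mm p G') = blk_mm p G'"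
proof -
  interpret C': nonneg_qbd "p+q" C'm C'0 C'1 by (rule C'_nonneg_qbd)
  note summable = C'.passages_summable_if_substochastic[OF C'_substochastic]
  have G': "G' \<in> carrier_mat (p+q) (p+q)" unfolding G'_def qbd_G_def by simp
  note Gb = blk_carrier[OF G']
  have zero_cols: "\<forall>i<p+q. \<forall>j<p. G' $$ (i,j) = 0"
  proof (intro allI impI)
    fix i j assume "i < p+q" "j < p"
    then show "G' $$ (i,j) = 0" unfolding G'_def by (intro C'.qbd_G_col_eq_0) (auto simp: C'_entries)
  qed
  then show blocks: "G' = four_block_mat (0\<^sub>m p p) (blk_pm p G') (0\<^sub>m q p) (blk_mm p G')"
    using four_block_mat_zero_col[OF G'] by simp
  show "nonneg_mat (blk_pm p G')"
    using nonneg_mat_blk[OF C'.qbd_G_nonneg[OF summable] G'[unfolded G'_def]] unfolding G'_def by blast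
  show "\<forall>r<p. (\<Sum>j<q. blk_pm p G' $$ (r,j)) \<le> 1"
  proof (intro allI impI)
    fix r assume r: "r < p"
    have "(\<Sum>j<q. blk_pm p G' $$ (r,j)) = (\<Sum>j<p+q. G' $$ (r,j))"
      using sum_lessThan_add_split[where f="\<lambda>j. G' $$ (r,j)" and p=p and q=q] r G' zero_cols
      by (simp add: blk_pm_def)
    also have "\<dots> \<le> 1" using C'.qbd_G_row_sum_le_1[OF C'_substochastic] r unfolding G'_def by simp
    finally show "(\<Sum>j<q. blk_pm p G' $$ (r,j)) \<le> 1" .
  qed
  have "G' = C'm + C'0 * G' + C'1 * (G' * G')"
    unfolding G'_def by (rule C'.qbd_G_fixpoint[OF summable])
  then have "four_block_mat (0\<^sub>m p p) (C'_rhs_pm (blk_pm p G') (blk_mm p G')) (0\<^sub>m q p) (C'_rhs_mm (blk_pm p G') (blk_mm p G'))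
      = four_block_mat (0\<^sub>m p p) (blk_pm p G') (0\<^sub>m q p) (blk_mm p G')"
    using C'_rhs_four_block[OF Gb(2,4)] blocks by simp
  then show "C'_rhs_pm (blk_pm p G') (blk_mm p G') = blk_pm p G'"
    "C'_rhs_mm (blk_pm p G') (blk_mm p G') = blk_mm p G'"
    by (simp_all only: four_block_mat_zero_col_eq_iff[OF Gb(2,4) C'_rhs_carrier[OF Gb(2,4)]])
qed

lemma \<alpha>_plus_\<beta>_nonzero: "\<alpha> + \<beta> \<noteq> 0"
  using lam(1) mu(1) by (simp add: add_pos_pos order.strict_implies_not_eq[symmetric])

lemma C'_fixpoint_riccati:
  assumes A: "A \<in> carrier_mat p q" "nonneg_mat A" "\<forall>r<p. (\<Sum>j<q. A $$ (r,j)) \<le> 1"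
    and B: "B \<in> carrier_mat q q"
    and fixpoint: "C'_rhs_pm A B = A" "C'_rhs_mm A B = B"
  shows "Tpm + A * Tmm + Tpp * A + A * Tmp * A = 0\<^sub>m p q"
    and "B = (1\<^sub>m q + \<beta> \<cdot>\<^sub>m (Tmm + Tmp * A)) * minv (1\<^sub>m q - \<alpha> \<cdot>\<^sub>m (Tmm + Tmp * A))"
proof -
  interpret cayley_transform q "Tmm + Tmp * A" "minv (1\<^sub>m q - \<alpha> \<cdot>\<^sub>m (Tmm + Tmp * A))" \<alpha> \<beta>
    by (rule cayley_of_substochastic[OF A])
  have B_cayley: "B = cayley"
    using cayley_unique[OF B] C'_rhs_mm_eq_iff[OF A(1) B] fixpoint(2) by simp
  then show "B = (1\<^sub>m q + \<beta> \<cdot>\<^sub>m (Tmm + Tmp * A)) * minv (1\<^sub>m q - \<alpha> \<cdot>\<^sub>m (Tmm + Tmp * A))"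
    unfolding cayley_def .
  have "A * (1\<^sub>m q - cayley) = (Tpm + Tpp * A) * (\<beta> \<cdot>\<^sub>m 1\<^sub>m q + \<alpha> \<cdot>\<^sub>m cayley)"
    using C'_rhs_pm_eq_iff(1)[OF A(1) B] fixpoint(1) B_cayley by simp
  moreover have "Tpm + Tpp * A \<in> carrier_mat p q" using T_blocks_carrier A(1) by auto
  ultimately have "(Tpm + Tpp * A) + A * (Tmm + Tmp * A) = 0\<^sub>m p q"
    using cayley_sylvester_iff[OF A(1) _ \<alpha>_plus_\<beta>_nonzero] by blast
  then show "Tpm + A * Tmm + Tpp * A + A * Tmp * A = 0\<^sub>m p q"
    using riccati_eq_sylvester[OF A(1)] by simp
qed

text \<open>The substochastic Riccati solution produced by the first QBD bounds the minimal one.\<close>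

lemma Psi_substochastic: "\<forall>r<p. (\<Sum>j<q. Psi $$ (r,j)) \<le> 1"
proof -
  let ?G = "qbd_G (p+q) C'm C'0 C'1"
  note G = qbd_G_C'_blocks
  have Gb: "blk_pm p ?G \<in> carrier_mat p q" "blk_mm p ?G \<in> carrier_mat q q"
    using blk_carrier[of ?G p q] by (auto simp: qbd_G_def)
  have "le_mat Psi (blk_pm p ?G)"
    using Psi_minimal[OF Gb(1) G(2) C'_fixpoint_riccati(1)[OF Gb(1) G(2,3) Gb(2) G(4,5)]] .
  then have "(\<Sum>j<q. Psi $$ (r,j)) \<le> (\<Sum>j<q. blk_pm p ?G $$ (r,j))" if "r < p" for r
    using that Psi_carrier unfolding le_mat_def by (intro sum_mono) auto
  then show ?thesis using G(3) by (meson order_trans)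
qed

lemma Psi_cayley: "cayley_transform q (Tmm + Tmp * Psi) (minv (1\<^sub>m q - \<alpha> \<cdot>\<^sub>m (Tmm + Tmp * Psi))) \<alpha>"
  by (rule cayley_of_substochastic[OF Psi_carrier Psi_nonneg Psi_substochastic])

lemma W_eq_cayley: "W = cayley_transform.cayley q (Tmm + Tmp * Psi) (minv (1\<^sub>m q - \<alpha> \<cdot>\<^sub>m (Tmm + Tmp * Psi))) \<beta>"
  unfolding W_def cayley_transform.cayley_def[OF Psi_cayley] ..

lemma W_nonneg: "nonneg_mat W"
proof -
  have "diag_dominant_Z_mat q (1\<^sub>m q - \<alpha> \<cdot>\<^sub>m (Tmm + Tmp * Psi))"
    using lam by (intro diag_dominant_Z_mat_one_minus_subgenerator U_subgenerator Psi_carrier Psi_nonneg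
        Psi_substochastic) auto
  note inv = diag_dominant_Z_mat_inverse[OF this]
  have "1\<^sub>m q + \<beta> \<cdot>\<^sub>m (Tmm + Tmp * Psi) = blk_mm p Pm + \<beta> \<cdot>\<^sub>m (Tmp * Psi)"
    unfolding Pm_blocks using T_blocks_carrier Psi_carrier
    by (simp add: smult_add_dim assoc_add_mat[of _ q q])
  moreover have "nonneg_mat (blk_mm p Pm + \<beta> \<cdot>\<^sub>m (Tmp * Psi))"
    using nonneg_mat_blk(4)[OF Pm_stochastic(1) Pm_carrier] T_blocks Psi_nonneg T_blocks_carrier Psi_carrier mu
    by (intro nonneg_mat_add[of _ _ q q] nonneg_mat_smult nonneg_mat_mult) (auto simp: Pm_blocks)
  ultimately show ?thesis
    unfolding W_def using inv T_blocks_carrier Psi_carrier by (intro nonneg_mat_mult) auto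
qed

lemma C'_rhs_Psi_W: "C'_rhs_pm Psi W = Psi" "C'_rhs_mm Psi W = W"
proof -
  interpret cayley_transform q "Tmm + Tmp * Psi" "minv (1\<^sub>m q - \<alpha> \<cdot>\<^sub>m (Tmm + Tmp * Psi))" \<alpha> \<beta>
    by (rule Psi_cayley)
  have "(Tpm + Tpp * Psi) + Psi * (Tmm + Tmp * Psi) = 0\<^sub>m p q"
    using Psi_riccati riccati_eq_sylvester[OF Psi_carrier] by simp
  moreover have "Tpm + Tpp * Psi \<in> carrier_mat p q" using T_blocks_carrier Psi_carrier by auto
  ultimately show "C'_rhs_pm Psi W = Psi"
    using C'_rhs_pm_eq_iff(1)[OF Psi_carrier W_carrier]
      cayley_sylvester_iff[OF Psi_carrier _ \<alpha>_plus_\<beta>_nonzero]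
    unfolding W_eq_cayley by blast
  show "C'_rhs_mm Psi W = W"
    using C'_rhs_mm_eq_iff[OF Psi_carrier W_carrier] cayley_left unfolding W_eq_cayley by simp
qed

lemma E_carrier: "E \<in> carrier_mat (p+q) (p+q)" and E_nonneg: "nonneg_mat E"
  unfolding E_def using Psi_carrier W_carrier Psi_nonneg W_nonneg
  by (auto intro!: nonneg_four_block_mat nonneg_mat_zero)

lemma E_C'_fixpoint: "C'm + C'0 * E + C'1 * (E * E) = E"
  unfolding E_def C'_rhs_four_block[OF Psi_carrier W_carrier] C'_rhs_Psi_W ..

lemma E_C_fixpoint: "Cm + C0 * E + C1 * (E * E) = E"
  unfolding E_def C_rhs_four_block[OF Psi_carrier W_carrier]
  using C_rhs_pm_eq_iff[OF Psi_carrier W_carrier] C'_rhs_Psi_W by simp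

lemma C_nonneg_qbd: "nonneg_qbd (p+q) Cm C0 C1"
proof -
  note c = T_blocks_carrier
  have blocks: "R * blk_pm p Pm \<in> carrier_mat p q" "R * blk_pm p Pl \<in> carrier_mat p q"
    "R * blk_pp p Pl \<in> carrier_mat p p"
    using blk_carrier[OF Pm_carrier] blk_carrier[OF Pl_carrier] R_carrier by auto
  have nonneg: "nonneg_mat (R * blk_pm p Pm)" "nonneg_mat (R * blk_pm p Pl)" "nonneg_mat (R * blk_pp p Pl)"
    using R_nonneg R_carrier nonneg_mat_blk[OF Pm_stochastic(1) Pm_carrier]
      nonneg_mat_blk[OF Pl_stochastic(1) Pl_carrier] blk_carrier[OF Pm_carrier] blk_carrier[OF Pl_carrier]
    by (auto intro!: nonneg_mat_mult)
  show ?thesis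
    by unfold_locales
      (use blocks nonneg W_carrier W_nonneg in \<open>auto simp: Cm_def C0_def C1_def intro!: nonneg_four_block_mat nonneg_mat_zero\<close>)
qed

theorem qbd_G_C'_eq_E: "qbd_G (p+q) C'm C'0 C'1 = E"
proof -
  interpret C': nonneg_qbd "p+q" C'm C'0 C'1 by (rule C'_nonneg_qbd)
  let ?A = "blk_pm p C'.G" and ?B = "blk_mm p C'.G"
  note blocks = qbd_G_C'_blocks
  have AB: "?A \<in> carrier_mat p q" "?B \<in> carrier_mat q q"
    using blk_carrier[of C'.G p q] by (auto simp: qbd_G_def)
  have "le_mat C'.G E"
    using C'.qbd_G_le_supersolution[OF E_carrier E_nonneg] E_C'_fixpoint le_mat_refl by simp
  then have "le_mat ?A Psi"
    unfolding E_def using blocks(1) le_mat_four_block_zero_col_iff[OF AB(1) Psi_carrier AB(2) W_carrier] by simp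
  moreover have "le_mat Psi ?A"
    using Psi_minimal[OF AB(1) blocks(2) C'_fixpoint_riccati(1)[OF AB(1) blocks(2,3) AB(2) blocks(4,5)]] .
  ultimately have "?A = Psi" using le_mat_antisym AB(1) Psi_carrier by blast
  moreover have "?B = W"
    using C'_fixpoint_riccati(2)[OF AB(1) blocks(2,3) AB(2) blocks(4,5)] \<open>?A = Psi\<close> unfolding W_def by simp
  ultimately show ?thesis unfolding E_def using blocks(1) by simp
qed

theorem qbd_G_C_eq_E: "qbd_G (p+q) Cm C0 C1 = E"
proof -
  interpret C: nonneg_qbd "p+q" Cm C0 C1 by (rule C_nonneg_qbd)
  interpret C': nonneg_qbd "p+q" C'm C'0 C'1 by (rule C'_nonneg_qbd)
  let ?A = "blk_pm p C.G" and ?B = "blk_mm p C.G"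
  have G: "C.G \<in> carrier_mat (p+q) (p+q)" by (simp add: qbd_G_def)
  have AB: "?A \<in> carrier_mat p q" "?B \<in> carrier_mat q q" using blk_carrier[OF G] by auto
  have E_super: "le_mat (Cm + C0 * E + C1 * (E * E)) E" using E_C_fixpoint le_mat_refl by simp
  note summable = C.passages_summable_if_supersolution[OF E_carrier E_nonneg E_super]
  have "\<forall>i<p+q. \<forall>j<p. C.G $$ (i,j) = 0"
  proof (intro allI impI)
    fix i j assume "i < p+q" "j < p"
    then show "C.G $$ (i,j) = 0" using W_carrier by (intro C.qbd_G_col_eq_0) (auto simp: Cm_def)
  qed
  then have blocks: "C.G = four_block_mat (0\<^sub>m p p) ?A (0\<^sub>m q p) ?B"
    using four_block_mat_zero_col[OF G] by simp
  have "four_block_mat (0\<^sub>m p p) (C_rhs_pm ?A ?B) (0\<^sub>m q p) W = four_block_mat (0\<^sub>m p p) ?A (0\<^sub>m q p) ?B"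
    using C.qbd_G_fixpoint[OF summable] C_rhs_four_block[OF AB] blocks by simp
  moreover have "C_rhs_pm ?A ?B \<in> carrier_mat p q"
    using R_carrier T_blocks_carrier AB by (auto simp: C_rhs_pm_def)
  ultimately have fixpoint: "C_rhs_pm ?A ?B = ?A" and B_eq: "?B = W"
    using four_block_mat_zero_col_eq_iff[OF AB _ W_carrier] by auto
  have "le_mat C.G E" by (rule C.qbd_G_le_supersolution[OF E_carrier E_nonneg E_super])
  then have A_Psi: "le_mat ?A Psi"
    unfolding E_def using blocks le_mat_four_block_zero_col_iff[OF AB(1) Psi_carrier AB(2) W_carrier] by simp
  have "le_mat (C'_rhs_mm ?A W) W"
    using C'_rhs_mm_mono[OF AB(1) Psi_carrier A_Psi W_carrier W_nonneg] C'_rhs_Psi_W by simp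
  moreover have "C'_rhs_pm ?A W = ?A" using fixpoint C_rhs_pm_eq_iff[OF AB] B_eq by simp
  ultimately have "le_mat (C'm + C'0 * C.G + C'1 * (C.G * C.G)) C.G"
    using C'_rhs_four_block[OF AB(1) W_carrier] blocks B_eq
      le_mat_four_block_zero_col_iff[OF C'_rhs_carrier(1)[OF AB(1) W_carrier] AB(1)
        C'_rhs_carrier(2)[OF AB(1) W_carrier] W_carrier]
    by (simp add: le_mat_refl)
  then have "le_mat E C.G"
    using C'.qbd_G_le_supersolution[OF G C.qbd_G_nonneg[OF summable]] qbd_G_C'_eq_E by simp
  with \<open>le_mat C.G E\<close> show ?thesis using le_mat_antisym G E_carrier by blast
qed

end

theorem theorem5:
  fixes p q :: nat and T Psi :: "real mat" and lam mu :: real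
  assumes pq: "p \<ge> 1" "q \<ge> 1"
    and gen: "is_generator (p + q) T"
    and Psi: "min_nonneg_riccati_sol p T Psi"
    and lam: "lam > 0" "\<forall>i<p+q. \<bar>T $$ (i,i)\<bar> \<le> lam"
    and mu: "mu > 0" "\<forall>i<p+q. \<bar>T $$ (i,i)\<bar> \<le> mu"
  shows
    "let n = p + q;
         Pl = 1\<^sub>m n + (1 / lam) \<cdot>\<^sub>m T;
         Pm = 1\<^sub>m n + (1 / mu) \<cdot>\<^sub>m T;
         U = blk_mm p T + blk_mp p T * Psi;
         W = (1\<^sub>m q + (1 / mu) \<cdot>\<^sub>m U) * minv (1\<^sub>m q - (1 / lam) \<cdot>\<^sub>m U);
         R = minv (1\<^sub>m p - (1 / mu) \<cdot>\<^sub>m blk_pp p T);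
         C'm = (1/2) \<cdot>\<^sub>m four_block_mat (0\<^sub>m p p) (blk_pm p Pm) (0\<^sub>m q p) (blk_mm p Pm);
         C'0 = (1/2) \<cdot>\<^sub>m four_block_mat (blk_pp p Pm) (blk_pm p Pl) (blk_mp p Pm) (blk_mm p Pl);
         C'1 = (1/2) \<cdot>\<^sub>m four_block_mat (blk_pp p Pl) (0\<^sub>m p q) (blk_mp p Pl) (0\<^sub>m q q);
         Cm = four_block_mat (0\<^sub>m p p) (R * blk_pm p Pm) (0\<^sub>m q p) W;
         C0 = four_block_mat (0\<^sub>m p p) (R * blk_pm p Pl) (0\<^sub>m q p) (0\<^sub>m q q);
         C1 = four_block_mat (R * blk_pp p Pl) (0\<^sub>m p q) (0\<^sub>m q p) (0\<^sub>m q q)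
     in qbd_G n C'm C'0 C'1 = qbd_G n Cm C0 C1
      \<and> qbd_G n C'm C'0 C'1 = four_block_mat (0\<^sub>m p p) Psi (0\<^sub>m q p) W"
proof -
  interpret fluid_qbd p q T Psi lam mu
    using gen Psi lam mu by unfold_locales
  show ?thesis
    using qbd_G_C'_eq_E qbd_G_C_eq_E
    unfolding Let_def C'm_def C'0_def C'1_def Cm_def C0_def C1_def R_def W_def E_def Pl_def Pm_def
    by simp
qed

end
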